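(* Consider an $M\times M$ input-queued switch with arrival rate matrix $\lambda\in\mathbb R_+^{M\times M}$ with $\lambda>0$ componentwise and $\sum_j\lambda_{\hat\imath j}=1$, $\sum_i\lambda_{i\hat\jmath}=1$ for all $\hat\imath,\hat\jmath$. Then $\lambda$ satisfies the complete loading condition and $\Xi(\lambda)=\{r_{\hat\imath}:1\le\hat\imath\le M\}\cup\{c_{\hat\jmath}:1\le\hat\jmath\le M\}$, where $(r_{\hat\imath})_{ij}=1_{i=\hat\imath}$ and $(c_{\hat\jmath})_{ij}=1_{j=\hat\jmath}$. Let $W(q)=(\xi\cdot q)_{\xi\in\Xi(\lambda)}\in\mathbb R_+^{2M}$. Then: (i) if $w$ is in the relative interior of $\{W(q):q\in\mathbb R_+^{M\times M}\}$, then $w\in\{W(q):q\in\mathcal I(\alpha)\}$ for all sufficiently small $\alpha>0$; (ii) for $M=2$, the set $\{W(q):q\in\mathcal I(\alpha)\}$ is strictly increasing as $\alpha$ decreases, i.e. for $0<\alpha<\beta$ it is a strict superset of $\{W(q):q\in\mathcal I(\beta)\}$.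
   Context: Input-queued switch: $N=M^2$ queues indexed by $(i,j)$, schedule set $\mathcal S$ = all $M\times M$ permutation matrices; for matrices, $x\cdot y=\sum_{i,j}x_{ij}y_{ij}$. $\langle\mathcal S\rangle$ convex hull; $\Lambda=\{\lambda\ge0:\lambda\le\sigma$ for some $\sigma\in\langle\mathcal S\rangle\}$. $E$ = extreme points of $\{\xi\ge0:\max_\pi\xi\cdot\pi\le1\}$, $\mathcal S^*$ its maximal elements (componentwise order), $\Xi(\lambda)=\{\xi\in\mathcal S^*:\xi\cdot\lambda=1\}$. Complete loading: $\lambda\in\Lambda$ and $\mathbf 1/\max_{\pi}\mathbf 1\cdot\pi$ is in the convex hull of $\Xi(\lambda)$. MW-$\alpha$ corresponds to $f(x)=x^\alpha$; $L_\alpha(q)=\sum_{ij}q_{ij}^{1+\alpha}/(1+\alpha)$. The lifting map $\Delta_\alpha(q)$ is the unique minimizer of $L_\alpha(r)$ over $r\ge0$ subject to $\xi\cdot r\ge\xi\cdot q$ for all $\xi\in\Xi(\lambda)$ and $r_{ij}\le q_{ij}$ whenever $\lambda_{ij}=0$; $\mathcal I(\alpha)=\{q\in\mathbb R_+^{M\times M}:\Delta_\alpha(q)=q\}$ is the set of invariant states. *)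

theory Defs
  imports "HOL-Analysis.Analysis"
begin

text \<open>An M x M input-queued switch; M = CARD('n). Matrices are real^'n^'n.\<close>



definition mdot :: "real^'n::finite^'n \<Rightarrow> real^'n^'n \<Rightarrow> real" where
  "mdot x y = (\<Sum>i\<in>UNIV. \<Sum>j\<in>UNIV. x$i$j * y$i$j)"

definition nonneg_mat :: "real^'n::finite^'n \<Rightarrow> bool" where
  "nonneg_mat x \<longleftrightarrow> (\<forall>i j. 0 \<le> x$i$j)"

definition ones_mat :: "real^'n::finite^'n" where
  "ones_mat = (\<chi> i j. 1)"

definition sched :: "(real^'n::finite^'n) set" where
  "sched = {(\<chi> i j. if \<sigma> i = j then 1 else 0) | \<sigma>. \<sigma> permutes (UNIV :: 'n set)}"

definition capacity_region :: "(real^'n::finite^'n) set" where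
  "capacity_region = {l. nonneg_mat l \<and> (\<exists>\<sigma>\<in>convex hull sched. l \<le> \<sigma>)}"

definition dual_polytope :: "(real^'n::finite^'n) set" where
  "dual_polytope = {\<xi>. nonneg_mat \<xi> \<and> Max ((\<lambda>\<pi>. mdot \<xi> \<pi>) ` sched) \<le> 1}"

definition extE :: "(real^'n::finite^'n) set" where
  "extE = {\<xi>. \<xi> extreme_point_of dual_polytope}"

definition Sstar :: "(real^'n::finite^'n) set" where
  "Sstar = {\<xi> \<in> extE. \<not> (\<exists>\<xi>'\<in>extE. \<xi> \<le> \<xi>' \<and> \<xi> \<noteq> \<xi>')}"

definition Xi :: "real^'n::finite^'n \<Rightarrow> (real^'n^'n) set" where
  "Xi l = {\<xi> \<in> Sstar. mdot \<xi> l = 1}"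

definition complete_loading :: "real^'n::finite^'n \<Rightarrow> bool" where
  "complete_loading l \<longleftrightarrow> l \<in> capacity_region \<and>
     (1 / Max ((\<lambda>\<pi>. mdot ones_mat \<pi>) ` (sched :: (real^'n^'n) set))) *\<^sub>R ones_mat \<in> convex hull (Xi l)"

definition Lyap :: "real \<Rightarrow> real^'n::finite^'n \<Rightarrow> real" where
  "Lyap \<alpha> q = (\<Sum>i\<in>UNIV. \<Sum>j\<in>UNIV. q$i$j powr (1 + \<alpha>) / (1 + \<alpha>))"

definition lift_feasible :: "real^'n::finite^'n \<Rightarrow> real^'n^'n \<Rightarrow> (real^'n^'n) set" where
  "lift_feasible l q = {r. nonneg_mat r \<and> (\<forall>\<xi>\<in>Xi l. mdot \<xi> r \<ge> mdot \<xi> q)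
      \<and> (\<forall>i j. l$i$j = 0 \<longrightarrow> r$i$j \<le> q$i$j)}"

definition lift :: "real^'n::finite^'n \<Rightarrow> real \<Rightarrow> real^'n^'n \<Rightarrow> real^'n^'n" where
  "lift l \<alpha> q = (THE r. r \<in> lift_feasible l q \<and> (\<forall>r'\<in>lift_feasible l q. Lyap \<alpha> r \<le> Lyap \<alpha> r'))"

definition invariant_states :: "real^'n::finite^'n \<Rightarrow> real \<Rightarrow> (real^'n^'n) set" where
  "invariant_states l \<alpha> = {q. nonneg_mat q \<and> lift l \<alpha> q = q}"

definition row_vec :: "'n::finite \<Rightarrow> real^'n^'n" where
  "row_vec k = (\<chi> i j. if i = k then 1 else 0)"

definition col_vec :: "'n::finite \<Rightarrow> real^'n^'n" where
  "col_vec k = (\<chi> i j. if j = k then 1 else 0)"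

text \<open>W(q) = (xi . q) for xi in Xi(lambda) = {r_k} \<union> {c_k}, indexed by 'n + 'n
  (Inl k for r_k, Inr k for c_k).\<close>
definition Wmap :: "real^'n::finite^'n \<Rightarrow> real^('n + 'n)" where
  "Wmap q = (\<chi> k. case k of Inl i \<Rightarrow> mdot (row_vec i) q | Inr j \<Rightarrow> mdot (col_vec j) q)"

end

theory Submission
  imports Defs
begin

(* Via Hall's marriage theorem we prove the Birkhoff--von
   Neumann theorem, and with a padding argument (every sub-stochastic matrix lies below a
   doubly stochastic one) we obtain that the polytope {xi >= 0 : xi . pi <= 1 for all
   permutation matrices pi} is the convex hull of the "line matrices", the 0/1 matrices
   supported in one row or one column.  Hence its maximal extreme points are exactly the row
   and column indicators r_k, c_k; this gives Xi(l) and, since 1/M is the average of the r_k,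
   the complete loading condition.

   With this Xi(l), the lift of q minimises the strictly convex
   L_alpha over the matrices whose row and column sums dominate those of q, so q is invariant
   iff it is that minimiser.  First-order conditions along "cycle" and "path" moves are
   necessary; an additive splitting q_ij^alpha = u_i + v_j (u, v >= 0) is sufficient.

   Part (i): minimise L_alpha over the states with workload w; for small alpha the minimiser
   has full support, so all cycle conditions are equalities and the splitting exists.
   Part (ii), M = 2: shift mass along the unique cycle of a beta-invariant state until the
   alpha-exchange identity holds (intermediate value theorem); an explicit alpha-invariant
   state shows that the inclusion is strict. *)

lemma mat_eqI: "(\<And>i j. x$i$j = y$i$j) \<Longrightarrow> x = (y::'a^'n::finite^'m::finite)"
  by (simp add: vec_eq_iff)

lemma mat_le_iff: "(x::real^'n::finite^'m::finite) \<le> y \<longleftrightarrow> (\<forall>i j. x$i$j \<le> y$i$j)"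
  by (simp add: less_eq_vec_def)

lemma sum_single_support:
  fixes f :: "'a::finite \<Rightarrow> real"
  assumes "\<And>i. i \<noteq> k \<Longrightarrow> f i = 0"
  shows "(\<Sum>i\<in>UNIV. f i) = f k"
proof -
  have "(\<Sum>i\<in>UNIV. f i) = (\<Sum>i\<in>{k}. f i)"
    using assms by (intro sum.mono_neutral_right) auto
  then show ?thesis by simp
qed

definition row_sum :: "real^'n::finite^'m::finite \<Rightarrow> 'm \<Rightarrow> real" where
  "row_sum q i = (\<Sum>j\<in>UNIV. q$i$j)"

definition col_sum :: "real^'n::finite^'m::finite \<Rightarrow> 'n \<Rightarrow> real" where
  "col_sum q j = (\<Sum>i\<in>UNIV. q$i$j)"

lemma row_sum_add_scale: "row_sum (q + e *\<^sub>R d) i = row_sum q i + e * row_sum d i"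
  by (simp add: row_sum_def sum.distrib sum_distrib_left)

lemma col_sum_add_scale: "col_sum (q + e *\<^sub>R d) j = col_sum q j + e * col_sum d j"
  by (simp add: col_sum_def sum.distrib sum_distrib_left)

lemma row_sum_combination: "row_sum (u *\<^sub>R x + v *\<^sub>R y) i = u * row_sum x i + v * row_sum y i"
  by (simp add: row_sum_def sum.distrib sum_distrib_left)

lemma col_sum_combination: "col_sum (u *\<^sub>R x + v *\<^sub>R y) j = u * col_sum x j + v * col_sum y j"
  by (simp add: col_sum_def sum.distrib sum_distrib_left)

lemma row_sum_diff_scale: "row_sum (q - e *\<^sub>R d) i = row_sum q i - e * row_sum d i"
  by (simp add: row_sum_def sum_subtractf sum_distrib_left)

lemma col_sum_diff_scale: "col_sum (q - e *\<^sub>R d) j = col_sum q j - e * col_sum d j"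
  by (simp add: col_sum_def sum_subtractf sum_distrib_left)

lemma entry_le_row_sum: "nonneg_mat q \<Longrightarrow> q$i$j \<le> row_sum q i"
  unfolding row_sum_def nonneg_mat_def by (rule member_le_sum) auto

lemma entry_le_col_sum: "nonneg_mat q \<Longrightarrow> q$i$j \<le> col_sum q j"
  unfolding col_sum_def nonneg_mat_def by (rule member_le_sum[of i UNIV "\<lambda>i. q$i$j"]) auto

lemma nonneg_row_sums_zero:
  assumes "nonneg_mat D" "\<And>i. row_sum D i = 0"
  shows "D = 0"
proof (rule mat_eqI)
  fix i j
  have "\<forall>j\<in>UNIV. D$i$j = 0"
    using assms by (subst sum_nonneg_eq_0_iff[symmetric]) (auto simp: row_sum_def nonneg_mat_def)
  then show "D$i$j = 0$i$j" by simp
qed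

lemma row_vec_e [simp]: "row_vec k $ i $ j = (if i = k then 1 else 0)"
  by (simp add: row_vec_def)

lemma col_vec_e [simp]: "col_vec k $ i $ j = (if j = k then 1 else 0)"
  by (simp add: col_vec_def)

lemma mdot_row: "mdot (row_vec k) q = row_sum q k"
  unfolding mdot_def row_sum_def by (subst sum_single_support[where k=k]) auto

lemma mdot_col: "mdot (col_vec k) q = col_sum q k"
proof -
  have "\<And>i. (\<Sum>j\<in>UNIV. col_vec k$i$j * q$i$j) = q$i$k"
    by (subst sum_single_support[where k=k]) auto
  then show ?thesis by (simp add: mdot_def col_sum_def)
qed

lemma mdot_inner: "mdot x y = inner x y"
  by (simp add: mdot_def inner_vec_def)


section \<open>Hall's marriage theorem\<close>

definition hall_condition :: "'i set \<Rightarrow> ('i \<Rightarrow> 'b set) \<Rightarrow> bool" where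
  "hall_condition I A \<longleftrightarrow> (\<forall>S\<subseteq>I. card S \<le> card (\<Union>(A ` S)))"

definition has_sdr :: "'i set \<Rightarrow> ('i \<Rightarrow> 'b set) \<Rightarrow> bool" where
  "has_sdr I A \<longleftrightarrow> (\<exists>f. inj_on f I \<and> (\<forall>i\<in>I. f i \<in> A i))"

lemma sdr_combine:
  assumes S: "S \<subseteq> I" and f: "inj_on f S" "\<forall>i\<in>S. f i \<in> A i \<inter> X"
    and rest: "has_sdr (I - S) (\<lambda>i. A i - X)"
  shows "has_sdr I A"
proof -
  obtain g where g: "inj_on g (I - S)" "\<forall>i\<in>I - S. g i \<in> A i - X"
    using rest by (auto simp: has_sdr_def)
  define h where "h = (\<lambda>i. if i \<in> S then f i else g i)"
  have "inj_on h I"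
  proof (rule inj_onI)
    fix x y assume xy: "x \<in> I" "y \<in> I" "h x = h y"
    have sep: "h a \<noteq> h b" if "a \<in> S" "b \<in> I - S" for a b
      using f(2) g(2) that by (auto simp: h_def)
    show "x = y"
      using xy f(1) g(1) sep[of x y] sep[of y x] by (auto simp: h_def inj_on_def split: if_splits)
  qed
  moreover have "\<forall>i\<in>I. h i \<in> A i" using f g by (auto simp: h_def)
  ultimately show ?thesis unfolding has_sdr_def by blast
qed

lemma hall_condition_remove_critical:
  assumes hall: "hall_condition I A" and fin: "finite I" "\<forall>i\<in>I. finite (A i)"
    and S: "S \<subseteq> I" "card (\<Union>(A ` S)) = card S"
  shows "hall_condition (I - S) (\<lambda>i. A i - \<Union>(A ` S))"
  unfolding hall_condition_def
proof (intro allI impI)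
  fix T assume T: "T \<subseteq> I - S"
  have fT: "finite T" and fS: "finite S" using T S(1) fin(1) finite_subset by blast+
  have eq: "\<Union>((\<lambda>i. A i - \<Union>(A ` S)) ` T) = \<Union>(A ` (T \<union> S)) - \<Union>(A ` S)" by auto
  have fU: "finite (\<Union>(A ` (T \<union> S)))" using T S(1) fin fT fS by auto
  have "T \<union> S \<subseteq> I" using T S(1) by auto
  then have "card (T \<union> S) \<le> card (\<Union>(A ` (T \<union> S)))"
    using hall unfolding hall_condition_def by blast
  moreover have "card (T \<union> S) = card T + card S" using T fT fS by (subst card_Un_disjoint) auto
  moreover have "card (\<Union>(A ` (T \<union> S)) - \<Union>(A ` S)) = card (\<Union>(A ` (T \<union> S))) - card (\<Union>(A ` S))"
    using fU by (intro card_Diff_subset) (auto intro: finite_subset)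
  ultimately show "card T \<le> card (\<Union>((\<lambda>i. A i - \<Union>(A ` S)) ` T))" using S(2) eq by simp
qed

lemma hall_condition_remove_point:
  assumes fin: "finite I" "\<forall>i\<in>I. finite (A i)" and i0: "i0 \<in> I"
    and slack: "\<And>S. S \<subseteq> I \<Longrightarrow> S \<noteq> {} \<Longrightarrow> S \<noteq> I \<Longrightarrow> card S < card (\<Union>(A ` S))"
  shows "hall_condition (I - {i0}) (\<lambda>i. A i - {x})"
  unfolding hall_condition_def
proof (intro allI impI)
  fix T assume T: "T \<subseteq> I - {i0}"
  show "card T \<le> card (\<Union>((\<lambda>i. A i - {x}) ` T))"
  proof (cases "T = {}")
    case False
    have "finite T" using T fin(1) finite_subset by blast
    then have fU: "finite (\<Union>(A ` T))" using T fin(2) by auto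
    have "card T < card (\<Union>(A ` T))" using slack[of T] T i0 False by auto
    moreover have "card (\<Union>((\<lambda>i. A i - {x}) ` T)) = card (\<Union>(A ` T) - {x})"
      by (rule arg_cong[where f=card]) auto
    moreover have "card (\<Union>(A ` T)) \<le> card (\<Union>(A ` T) - {x}) + 1"
      using fU by (simp add: card_Diff_singleton_if) linarith
    ultimately show ?thesis by linarith
  qed simp
qed

theorem hall:
  assumes "finite I" "\<forall>i\<in>I. finite (A i)" "hall_condition I A"
  shows "has_sdr I A"
  using assms
proof (induction "card I" arbitrary: I A rule: less_induct)
  case less
  note fin = less.prems(1,2) and hall = less.prems(3)
  show ?case
  proof (cases "\<exists>S. S \<subseteq> I \<and> S \<noteq> {} \<and> S \<noteq> I \<and> card (\<Union>(A ` S)) = card S")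
    case True
    then obtain S where S: "S \<subseteq> I" "S \<noteq> {}" "S \<noteq> I" "card (\<Union>(A ` S)) = card S" by blast
    have fS: "finite S" using S(1) fin(1) finite_subset by blast
    have "hall_condition S A" using hall S(1) by (auto simp: hall_condition_def)
    moreover have "card S < card I" using S fin(1) by (meson psubsetI psubset_card_mono)
    ultimately obtain f where f: "inj_on f S" "\<forall>i\<in>S. f i \<in> A i"
      using less.hyps[of S A] fS S(1) fin by (auto simp: has_sdr_def)
    have "card (I - S) < card I"
    proof -
      have "card S > 0" using fS S(2) by auto
      then show ?thesis using card_Diff_subset[OF fS S(1)] card_mono[OF fin(1) S(1)] by linarith
    qed
    then have "has_sdr (I - S) (\<lambda>i. A i - \<Union>(A ` S))"
      using less.hyps hall_condition_remove_critical[OF hall fin S(1,4)] fin by auto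
    then show ?thesis using sdr_combine[OF S(1) f(1)] f(2) by blast
  next
    case False
    then have slack: "\<And>S. S \<subseteq> I \<Longrightarrow> S \<noteq> {} \<Longrightarrow> S \<noteq> I \<Longrightarrow> card S < card (\<Union>(A ` S))"
      using hall by (metis hall_condition_def le_neq_implies_less)
    show ?thesis
    proof (cases "I = {}")
      case False
      then obtain i0 where i0: "i0 \<in> I" by blast
      have "card {i0} \<le> card (A i0)" using hall i0 by (auto simp: hall_condition_def)
      then obtain x where x: "x \<in> A i0" by fastforce
      have "card (I - {i0}) < card I" using i0 fin(1) by (meson card_Diff1_less)
      then have "has_sdr (I - {i0}) (\<lambda>i. A i - {x})"
        using less.hyps hall_condition_remove_point[OF fin i0 slack] fin by auto
      then show ?thesis using sdr_combine[of "{i0}" I "\<lambda>_. x" A "{x}"] i0 x by auto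
    qed (simp add: has_sdr_def)
  qed
qed

section \<open>Permutation matrices and the Birkhoff--von Neumann theorem\<close>

definition perm_mat :: "('n::finite \<Rightarrow> 'n) \<Rightarrow> real^'n^'n" where
  "perm_mat \<sigma> = (\<chi> i j. if \<sigma> i = j then 1 else 0)"

lemma sched_eq: "sched = perm_mat ` {\<sigma>. \<sigma> permutes (UNIV::'n::finite set)}"
  by (auto simp: sched_def perm_mat_def)

lemma finite_sched: "finite (sched :: (real^'n::finite^'n) set)"
  unfolding sched_eq by (simp add: finite_permutations)

lemma sched_ne: "(sched :: (real^'n::finite^'n) set) \<noteq> {}"
  unfolding sched_eq using permutes_id by blast

lemma perm_mat_in_hull: "\<sigma> permutes UNIV \<Longrightarrow> perm_mat \<sigma> \<in> convex hull sched"
  by (auto simp: sched_eq intro: hull_inc)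

lemma mdot_perm_mat: "mdot x (perm_mat \<sigma>) = (\<Sum>i\<in>UNIV. x$i$(\<sigma> i))"
  unfolding mdot_def perm_mat_def by (simp add: if_distrib cong: if_cong)

lemma row_sum_perm_mat: "row_sum (perm_mat \<sigma>) i = 1"
  unfolding row_sum_def perm_mat_def by simp

lemma col_sum_perm_mat:
  assumes "\<sigma> permutes UNIV"
  shows "col_sum (perm_mat \<sigma>) j = 1"
proof -
  have "\<And>i. (\<sigma> i = j) = (i = inv \<sigma> j)"
    using assms by (metis permutes_inverses(1) permutes_inverses(2))
  then show ?thesis unfolding col_sum_def perm_mat_def by simp
qed

text \<open>A nonnegative matrix with all row and column sums equal to s > 0 has a permutation
  along which all entries are positive: Hall's condition for the positive-entry pattern
  follows by double counting.\<close>
lemma positive_diagonal: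
  fixes D :: "real^'n::finite^'n"
  assumes nn: "nonneg_mat D" and rows: "\<And>i. row_sum D i = s"
    and cols: "\<And>j. col_sum D j = s" and s: "s > 0"
  obtains \<sigma> where "\<sigma> permutes UNIV" "\<And>i. D$i$(\<sigma> i) > 0"
proof -
  define A where "A = (\<lambda>i. {j. D$i$j > 0})"
  have "card S \<le> card (\<Union>(A ` S))" for S
  proof -
    define N where "N = \<Union>(A ` S)"
    have "real (card S) * s = (\<Sum>i\<in>S. \<Sum>j\<in>UNIV. D$i$j)" using rows by (simp add: row_sum_def)
    also have "\<dots> = (\<Sum>i\<in>S. \<Sum>j\<in>N. D$i$j)"
      using nn by (intro sum.cong refl sum.mono_neutral_right)
        (auto simp: N_def A_def nonneg_mat_def less_le)
    also have "\<dots> = (\<Sum>j\<in>N. \<Sum>i\<in>S. D$i$j)" by (rule sum.swap)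
    also have "\<dots> \<le> (\<Sum>j\<in>N. \<Sum>i\<in>UNIV. D$i$j)"
      by (rule sum_mono, rule sum_mono2) (use nn in \<open>auto simp: nonneg_mat_def\<close>)
    also have "\<dots> = real (card N) * s" using cols by (simp add: col_sum_def)
    finally show ?thesis using s unfolding N_def by simp
  qed
  then obtain f where f: "inj f" "\<And>i. f i \<in> A i"
    using hall[of UNIV A] by (auto simp: hall_condition_def has_sdr_def)
  have "f permutes UNIV" using f(1) by (intro bij_imp_permutes) (auto simp: bij_def finite_UNIV_inj_surj)
  then show ?thesis using that f(2) by (auto simp: A_def)
qed

definition support :: "real^'n::finite^'m::finite \<Rightarrow> ('m \<times> 'n) set" where
  "support D = {(i, j). D$i$j \<noteq> 0}"

text \<open>Subtracting theta times the permutation matrix found above, with theta the smallest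
  entry on that permutation, keeps the row and column sums equal and shrinks the support.\<close>
lemma peel_permutation:
  fixes D :: "real^'n::finite^'n"
  assumes nn: "nonneg_mat D" and rows: "\<And>i. row_sum D i = s"
    and cols: "\<And>j. col_sum D j = s" and s: "s > 0"
  obtains \<sigma> \<theta> where "\<sigma> permutes UNIV" "0 < \<theta>" "\<theta> \<le> s"
    "nonneg_mat (D - \<theta> *\<^sub>R perm_mat \<sigma>)"
    "\<And>i. row_sum (D - \<theta> *\<^sub>R perm_mat \<sigma>) i = s - \<theta>"
    "\<And>j. col_sum (D - \<theta> *\<^sub>R perm_mat \<sigma>) j = s - \<theta>"
    "support (D - \<theta> *\<^sub>R perm_mat \<sigma>) \<subset> support D"
proof -
  obtain \<sigma> where \<sigma>: "\<sigma> permutes UNIV" "\<And>i. D$i$(\<sigma> i) > 0"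
    using positive_diagonal[OF assms] by blast
  define \<theta> where "\<theta> = Min (range (\<lambda>i. D$i$(\<sigma> i)))"
  have "\<theta> \<in> range (\<lambda>i. D$i$(\<sigma> i))" unfolding \<theta>_def by (rule Min_in) auto
  then obtain i0 where i0: "D$i0$(\<sigma> i0) = \<theta>" by auto
  have \<theta>_le: "\<And>i. \<theta> \<le> D$i$(\<sigma> i)" unfolding \<theta>_def by simp
  have \<theta>_pos: "\<theta> > 0" using i0 \<sigma>(2) by metis
  have "\<theta> \<le> s" using entry_le_row_sum[OF nn, of i0 "\<sigma> i0"] i0 rows by simp
  define D' where "D' = D - \<theta> *\<^sub>R perm_mat \<sigma>"
  have D'_e: "\<And>i j. D'$i$j = D$i$j - (if \<sigma> i = j then \<theta> else 0)"
    by (simp add: D'_def perm_mat_def)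
  have "nonneg_mat D'" using nn \<theta>_le by (auto simp: nonneg_mat_def D'_e)
  moreover have "row_sum D' i = s - \<theta>" for i
    using rows[of i] row_sum_perm_mat[of \<sigma> i] by (simp add: D'_def row_sum_diff_scale)
  moreover have "col_sum D' j = s - \<theta>" for j
    using cols[of j] col_sum_perm_mat[OF \<sigma>(1), of j] by (simp add: D'_def col_sum_diff_scale)
  moreover have "support D' \<subset> support D"
  proof
    show "support D' \<subseteq> support D"
    proof
      fix p assume "p \<in> support D'"
      then obtain a b where p: "p = (a, b)" "D'$a$b \<noteq> 0" by (auto simp: support_def)
      have "D$a$b \<noteq> 0"
      proof (cases "\<sigma> a = b")
        case True then show ?thesis using \<theta>_le[of a] \<theta>_pos by auto
      next
        case False then show ?thesis using p(2) by (simp add: D'_e)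
      qed
      then show "p \<in> support D" using p(1) by (simp add: support_def)
    qed
    show "support D' \<noteq> support D"
      using \<sigma>(2)[of i0] i0 by (auto simp: support_def D'_e set_eq_iff)
  qed
  ultimately show ?thesis using that \<sigma>(1) \<theta>_pos \<open>\<theta> \<le> s\<close> unfolding D'_def by blast
qed

lemma birkhoff_scaled:
  fixes D :: "real^'n::finite^'n"
  assumes "nonneg_mat D" "\<And>i. row_sum D i = s" "\<And>j. col_sum D j = s" "s > 0"
  shows "(1 / s) *\<^sub>R D \<in> convex hull sched"
  using assms
proof (induction "card (support D)" arbitrary: D s rule: less_induct)
  case less
  obtain \<sigma> \<theta> where \<sigma>: "\<sigma> permutes UNIV" and \<theta>: "0 < \<theta>" "\<theta> \<le> s"
    and peeled: "nonneg_mat (D - \<theta> *\<^sub>R perm_mat \<sigma>)"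
    "\<And>i. row_sum (D - \<theta> *\<^sub>R perm_mat \<sigma>) i = s - \<theta>"
    "\<And>j. col_sum (D - \<theta> *\<^sub>R perm_mat \<sigma>) j = s - \<theta>"
    "support (D - \<theta> *\<^sub>R perm_mat \<sigma>) \<subset> support D"
    using peel_permutation[OF less.prems] by blast
  define D' where "D' = D - \<theta> *\<^sub>R perm_mat \<sigma>"
  have P: "perm_mat \<sigma> \<in> convex hull sched" using \<sigma> by (rule perm_mat_in_hull)
  show ?case
  proof (cases "\<theta> = s")
    case True
    then have "D' = 0" using peeled(1,2) by (intro nonneg_row_sums_zero) (auto simp: D'_def)
    then show ?thesis using P True less.prems(4) by (simp add: D'_def)
  next
    case False
    then have s': "s - \<theta> > 0" using \<theta> by simp
    have "card (support D') < card (support D)"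
      using peeled(4) by (simp add: D'_def psubset_card_mono support_def)
    then have IH: "(1 / (s - \<theta>)) *\<^sub>R D' \<in> convex hull sched"
      using less.hyps peeled s' by (simp add: D'_def)
    have "((s - \<theta>) / s) *\<^sub>R ((1 / (s - \<theta>)) *\<^sub>R D') = (1 / s) *\<^sub>R D'"
      using s' by simp
    then have "(1 / s) *\<^sub>R D = (\<theta> / s) *\<^sub>R perm_mat \<sigma> + ((s - \<theta>) / s) *\<^sub>R ((1 / (s - \<theta>)) *\<^sub>R D')"
      by (simp add: D'_def scaleR_diff_right)
    also have "\<dots> \<in> convex hull sched"
      using P IH \<theta> less.prems(4)
      by (intro convexD[OF convex_convex_hull]) (auto simp: diff_divide_distrib)
    finally show ?thesis .
  qed
qed

theorem birkhoff:
  fixes D :: "real^'n::finite^'n"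
  assumes "nonneg_mat D" "\<And>i. row_sum D i = 1" "\<And>j. col_sum D j = 1"
  shows "D \<in> convex hull sched"
  using birkhoff_scaled[OF assms] by simp

text \<open>A nonnegative matrix with row and column sums at most 1 lies below a doubly stochastic
  one: distribute the row deficits r and column deficits c proportionally, r_i c_j / delta.\<close>
lemma doubly_stochastic_above:
  fixes w :: "real^'n::finite^'n"
  assumes nn: "nonneg_mat w" and rows: "\<And>i. row_sum w i \<le> 1" and cols: "\<And>j. col_sum w j \<le> 1"
  obtains D where "nonneg_mat D" "\<And>i. row_sum D i = 1" "\<And>j. col_sum D j = 1" "w \<le> D"
proof -
  define r where "r = (\<lambda>i. 1 - row_sum w i)"
  define c where "c = (\<lambda>j. 1 - col_sum w j)"
  define \<delta> where "\<delta> = (\<Sum>i\<in>UNIV. r i)"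
  have r0: "\<And>i. r i \<ge> 0" and c0: "\<And>j. c j \<ge> 0" using rows cols by (auto simp: r_def c_def)
  have \<delta>_cols: "\<delta> = (\<Sum>j\<in>UNIV. c j)"
  proof -
    have "(\<Sum>i\<in>UNIV. \<Sum>j\<in>UNIV. w$i$j) = (\<Sum>j\<in>UNIV. \<Sum>i\<in>UNIV. w$i$j)" by (rule sum.swap)
    then show ?thesis unfolding \<delta>_def r_def c_def row_sum_def col_sum_def by (simp add: sum_subtractf)
  qed
  show ?thesis
  proof (cases "\<delta> = 0")
    case True
    have "\<forall>i\<in>UNIV. r i = 0"
      using True r0 unfolding \<delta>_def by (subst sum_nonneg_eq_0_iff[symmetric]) auto
    moreover have "\<forall>j\<in>UNIV. c j = 0"
      using True c0 unfolding \<delta>_cols by (subst sum_nonneg_eq_0_iff[symmetric]) auto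
    ultimately show ?thesis using that[of w] nn by (auto simp: r_def c_def)
  next
    case False
    then have \<delta>: "\<delta> > 0" using r0 unfolding \<delta>_def by (simp add: less_le sum_nonneg)
    define D where "D = (\<chi> i j. w$i$j + r i * c j / \<delta>)"
    have "nonneg_mat D" using nn r0 c0 \<delta> by (auto simp: D_def nonneg_mat_def)
    moreover have "row_sum D i = 1" for i
    proof -
      have "row_sum D i = row_sum w i + r i * (\<Sum>j\<in>UNIV. c j) / \<delta>"
        by (simp add: D_def row_sum_def sum.distrib sum_distrib_left sum_divide_distrib)
      then show ?thesis using \<delta> \<delta>_cols by (simp add: r_def)
    qed
    moreover have "col_sum D j = 1" for j
    proof -
      have "col_sum D j = col_sum w j + c j * (\<Sum>i\<in>UNIV. r i) / \<delta>"
        by (simp add: D_def col_sum_def sum.distrib sum_distrib_left sum_divide_distrib mult.commute)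
      then show ?thesis using \<delta> by (simp add: c_def \<delta>_def)
    qed
    moreover have "w \<le> D" using r0 c0 \<delta> by (simp add: D_def mat_le_iff)
    ultimately show ?thesis using that by blast
  qed
qed

section \<open>The dual polytope and its maximal extreme points\<close>

lemma mdot_commute: "mdot x y = mdot y x"
  by (simp add: mdot_def mult.commute)

lemma dual_iff:
  "\<xi> \<in> dual_polytope \<longleftrightarrow>
     nonneg_mat \<xi> \<and> (\<forall>\<sigma>. \<sigma> permutes UNIV \<longrightarrow> (\<Sum>i\<in>UNIV. \<xi>$i$(\<sigma> i)) \<le> 1)"
proof -
  have "Max ((\<lambda>\<pi>. mdot \<xi> \<pi>) ` sched) \<le> 1 \<longleftrightarrow> (\<forall>\<pi>\<in>sched. mdot \<xi> \<pi> \<le> 1)"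
    using finite_sched sched_ne by (subst Max_le_iff) auto
  also have "\<dots> \<longleftrightarrow> (\<forall>\<sigma>. \<sigma> permutes UNIV \<longrightarrow> (\<Sum>i\<in>UNIV. \<xi>$i$(\<sigma> i)) \<le> 1)"
    by (auto simp: sched_eq mdot_perm_mat)
  finally show ?thesis by (simp add: dual_polytope_def)
qed

lemma dual_two_entries:
  assumes \<xi>: "\<xi> \<in> dual_polytope" and \<sigma>: "\<sigma> permutes UNIV" and "i \<noteq> l"
  shows "\<xi>$i$(\<sigma> i) + \<xi>$l$(\<sigma> l) \<le> 1"
proof -
  have "(\<Sum>x\<in>{i, l}. \<xi>$x$(\<sigma> x)) \<le> (\<Sum>x\<in>UNIV. \<xi>$x$(\<sigma> x))"
    using \<xi> by (intro sum_mono2) (auto simp: dual_iff nonneg_mat_def)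
  also have "\<dots> \<le> 1" using \<xi> \<sigma> by (simp add: dual_iff)
  finally show ?thesis using \<open>i \<noteq> l\<close> by simp
qed

lemma dual_entry_le1:
  assumes "\<xi> \<in> dual_polytope"
  shows "\<xi>$i$j \<le> 1"
proof -
  have "\<xi>$i$(Transposition.transpose i j i) \<le> (\<Sum>x\<in>UNIV. \<xi>$x$(Transposition.transpose i j x))"
    by (rule member_le_sum) (use assms in \<open>auto simp: dual_iff nonneg_mat_def\<close>)
  also have "\<dots> \<le> 1" using assms by (simp add: dual_iff permutes_swap_id)
  finally show ?thesis by simp
qed

lemma convex_dual: "convex dual_polytope"
  unfolding convex_def
proof (intro ballI allI impI)
  fix x y :: "real^'n^'n" and u v :: real
  assume x: "x \<in> dual_polytope" and y: "y \<in> dual_polytope" and uv: "0 \<le> u" "0 \<le> v" "u + v = 1"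
  show "u *\<^sub>R x + v *\<^sub>R y \<in> dual_polytope"
    unfolding dual_iff
  proof (intro conjI allI impI)
    show "nonneg_mat (u *\<^sub>R x + v *\<^sub>R y)" using x y uv by (auto simp: dual_iff nonneg_mat_def)
    fix \<sigma> :: "'n \<Rightarrow> 'n" assume \<sigma>: "\<sigma> permutes UNIV"
    have "(\<Sum>i\<in>UNIV. (u *\<^sub>R x + v *\<^sub>R y)$i$(\<sigma> i))
        = u * (\<Sum>i\<in>UNIV. x$i$(\<sigma> i)) + v * (\<Sum>i\<in>UNIV. y$i$(\<sigma> i))"
      by (simp add: sum.distrib sum_distrib_left)
    also have "\<dots> \<le> u * 1 + v * 1"
      using x y \<sigma> uv by (intro add_mono mult_left_mono) (auto simp: dual_iff)
    finally show "(\<Sum>i\<in>UNIV. (u *\<^sub>R x + v *\<^sub>R y)$i$(\<sigma> i)) \<le> 1" using uv by simp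
  qed
qed

lemma mdot_hull_le1:
  assumes "\<xi> \<in> dual_polytope" "D \<in> convex hull sched"
  shows "mdot \<xi> D \<le> 1"
proof -
  have "convex hull sched \<subseteq> {x. inner \<xi> x \<le> 1}"
    using assms(1) by (intro hull_minimal convex_halfspace_le)
      (auto simp: sched_eq mdot_inner[symmetric] mdot_perm_mat dual_iff)
  then show ?thesis using assms(2) by (auto simp: mdot_inner)
qed

definition line_mats :: "(real^'n::finite^'n) set" where
  "line_mats = {x. (\<forall>i j. x$i$j = 0 \<or> x$i$j = 1) \<and>
     (\<exists>k. (\<forall>i j. x$i$j \<noteq> 0 \<longrightarrow> i = k) \<or> (\<forall>i j. x$i$j \<noteq> 0 \<longrightarrow> j = k))}"

lemma finite_line_mats: "finite (line_mats :: (real^'n::finite^'n) set)"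
proof -
  have "line_mats \<subseteq> range (\<lambda>f::'n \<Rightarrow> 'n \<Rightarrow> bool. (\<chi> i j. if f i j then 1 else 0) :: real^'n^'n)"
  proof
    fix x :: "real^'n^'n" assume "x \<in> line_mats"
    then have "x = (\<chi> i j. if x$i$j = 1 then 1 else 0)"
      unfolding line_mats_def by (intro mat_eqI) auto
    then show "x \<in> range (\<lambda>f::'n \<Rightarrow> 'n \<Rightarrow> bool. (\<chi> i j. if f i j then 1 else 0) :: real^'n^'n)"
      by (intro image_eqI[where x="\<lambda>i j. x$i$j = 1"]) auto
  qed
  then show ?thesis by (rule finite_subset) simp
qed

lemma row_line_mat: "(\<chi> i j. if i = k \<and> P j then 1 else 0) \<in> line_mats"
  unfolding line_mats_def by auto

lemma col_line_mat: "(\<chi> i j. if j = k \<and> P i then 1 else 0) \<in> line_mats"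
  unfolding line_mats_def by auto

lemma line_mats_dual: "line_mats \<subseteq> dual_polytope"
proof
  fix x :: "real^'n^'n" assume x: "x \<in> line_mats"
  then have x01: "\<And>i j. x$i$j = 0 \<or> x$i$j = 1" by (auto simp: line_mats_def)
  then have nn: "nonneg_mat x" and le1: "\<And>i j. x$i$j \<le> 1"
    by (auto simp: nonneg_mat_def) (metis order.refl zero_le_one)+
  obtain k where k: "(\<forall>i j. x$i$j \<noteq> 0 \<longrightarrow> i = k) \<or> (\<forall>i j. x$i$j \<noteq> 0 \<longrightarrow> j = k)"
    using x by (auto simp: line_mats_def)
  show "x \<in> dual_polytope" unfolding dual_iff
  proof (intro conjI allI impI nn)
    fix \<sigma> :: "'n \<Rightarrow> 'n" assume \<sigma>: "\<sigma> permutes UNIV"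
    have "\<exists>i0. \<forall>i. i \<noteq> i0 \<longrightarrow> x$i$(\<sigma> i) = 0"
      using k
    proof
      assume "\<forall>i j. x$i$j \<noteq> 0 \<longrightarrow> i = k"
      then show ?thesis by blast
    next
      assume col: "\<forall>i j. x$i$j \<noteq> 0 \<longrightarrow> j = k"
      have "\<sigma> i \<noteq> k" if "i \<noteq> inv \<sigma> k" for i
        using that \<sigma> by (metis permutes_inverses(2))
      then show ?thesis using col by blast
    qed
    then obtain i0 where "\<And>i. i \<noteq> i0 \<Longrightarrow> x$i$(\<sigma> i) = 0" by blast
    then have "(\<Sum>i\<in>UNIV. x$i$(\<sigma> i)) = x$i0$(\<sigma> i0)" by (rule sum_single_support)
    then show "(\<Sum>i\<in>UNIV. x$i$(\<sigma> i)) \<le> 1" using le1 by simp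
  qed
qed

text \<open>Testing a linear functional c on the line matrices that pick the positive entries of
  one row or column bounds the row and column sums of its positive part.\<close>
lemma positive_part_line_sums:
  fixes c :: "real^'n::finite^'n"
  assumes lines: "\<And>x. x \<in> line_mats \<Longrightarrow> mdot c x < B"
  shows "row_sum (\<chi> i j. max (c$i$j) 0) k < B" "col_sum (\<chi> i j. max (c$i$j) 0) k < B"
proof -
  define x where "x = ((\<chi> i j. if i = k \<and> 0 < c$k$j then 1 else 0) :: real^'n^'n)"
  have "mdot c x = (\<Sum>j\<in>UNIV. c$k$j * x$k$j)"
    unfolding mdot_def by (rule sum_single_support) (simp add: x_def)
  also have "\<dots> = row_sum (\<chi> i j. max (c$i$j) 0) k"
    unfolding row_sum_def by (intro sum.cong) (auto simp: x_def)
  finally show "row_sum (\<chi> i j. max (c$i$j) 0) k < B"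
    using lines[OF row_line_mat[of k "\<lambda>j. 0 < c$k$j"]] unfolding x_def by simp
next
  define y where "y = ((\<chi> i j. if j = k \<and> 0 < c$i$k then 1 else 0) :: real^'n^'n)"
  have "mdot c y = (\<Sum>i\<in>UNIV. c$i$k * y$i$k)"
    unfolding mdot_def by (intro sum.cong refl sum_single_support) (simp add: y_def)
  also have "\<dots> = col_sum (\<chi> i j. max (c$i$j) 0) k"
    unfolding col_sum_def by (intro sum.cong) (auto simp: y_def)
  finally show "col_sum (\<chi> i j. max (c$i$j) 0) k < B"
    using lines[OF col_line_mat[of k "\<lambda>i. 0 < c$i$k"]] unfolding y_def by simp
qed

text \<open>The duality underlying the description of the dual polytope: a linear functional that is
  below B on all line matrices is at most B on the dual polytope.  Its positive part, scaled
  by 1/B, has row and column sums at most 1, so it is dominated by a doubly stochastic matrix,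
  i.e. (Birkhoff) by a convex combination of permutation matrices.\<close>
lemma dual_bound_from_lines:
  fixes c :: "real^'n::finite^'n"
  assumes lines: "\<And>x. x \<in> line_mats \<Longrightarrow> mdot c x < B" and \<xi>: "\<xi> \<in> dual_polytope"
  shows "mdot c \<xi> \<le> B"
proof -
  define w where "w = ((\<chi> i j. max (c$i$j) 0) :: real^'n^'n)"
  have B: "B > 0" using lines[of 0] by (simp add: line_mats_def mdot_def)
  have "row_sum w i < B" "col_sum w j < B" for i j
    unfolding w_def using positive_part_line_sums[OF lines] by blast+
  then have rows: "row_sum ((1 / B) *\<^sub>R w) i \<le> 1" and cols: "col_sum ((1 / B) *\<^sub>R w) j \<le> 1"
    for i j using B by (simp_all add: row_sum_def col_sum_def sum_divide_distrib[symmetric] less_imp_le)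
  have "nonneg_mat ((1 / B) *\<^sub>R w)" using B by (simp add: nonneg_mat_def w_def)
  then obtain D where D: "nonneg_mat D" "\<And>i. row_sum D i = 1" "\<And>j. col_sum D j = 1"
    "(1 / B) *\<^sub>R w \<le> D"
    using doubly_stochastic_above rows cols by blast
  have \<xi>_nn: "nonneg_mat \<xi>" using \<xi> by (simp add: dual_iff)
  have "mdot c \<xi> \<le> mdot w \<xi>"
    unfolding mdot_def using \<xi>_nn by (intro sum_mono mult_right_mono) (auto simp: w_def nonneg_mat_def)
  also have "\<dots> = B * mdot ((1 / B) *\<^sub>R w) \<xi>"
    using B by (simp add: mdot_def sum_distrib_left)
  also have "\<dots> \<le> B * mdot D \<xi>"
    unfolding mdot_def using \<xi>_nn D(4) B
    by (intro mult_left_mono sum_mono mult_right_mono) (auto simp: nonneg_mat_def mat_le_iff)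
  also have "\<dots> \<le> B"
    using mdot_hull_le1[OF \<xi> birkhoff[OF D(1-3)]] B by (simp add: mdot_commute)
  finally show ?thesis .
qed

theorem dual_eq_hull_lines: "dual_polytope = convex hull (line_mats :: (real^'n::finite^'n) set)"
proof (rule equalityI)
  show "dual_polytope \<subseteq> convex hull (line_mats :: (real^'n^'n) set)"
  proof
    fix \<xi> :: "real^'n^'n" assume \<xi>: "\<xi> \<in> dual_polytope"
    show "\<xi> \<in> convex hull line_mats"
    proof (rule ccontr)
      assume "\<xi> \<notin> convex hull line_mats"
      moreover have "closed (convex hull (line_mats :: (real^'n^'n) set))"
        by (intro compact_imp_closed compact_convex_hull finite_imp_compact finite_line_mats)
      ultimately obtain a b where ab: "inner a \<xi> < b" "\<forall>x\<in>convex hull line_mats. b < inner a x"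
        using separating_hyperplane_closed_point[OF convex_convex_hull] by blast
      have "mdot (- a) x < - b" if "x \<in> line_mats" for x
        using ab(2) hull_inc[OF that] by (simp add: mdot_inner)
      then have "mdot (- a) \<xi> \<le> - b" using \<xi> by (rule dual_bound_from_lines)
      then show False using ab(1) by (simp add: mdot_inner)
    qed
  qed
next
  show "convex hull line_mats \<subseteq> (dual_polytope :: (real^'n^'n) set)"
    by (intro hull_minimal line_mats_dual convex_dual)
qed

lemma extE_line_mat:
  fixes \<xi> :: "real^'n::finite^'n"
  assumes "\<xi> \<in> extE"
  shows "\<xi> \<in> line_mats"
proof -
  have "\<xi> extreme_point_of (convex hull line_mats)"
    using assms dual_eq_hull_lines[where 'n='n] by (simp add: extE_def)
  then show ?thesis by (rule extreme_point_of_convex_hull)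
qed

lemma extE_dual: "\<xi> \<in> extE \<Longrightarrow> \<xi> \<in> dual_polytope"
  by (simp add: extE_def extreme_point_of_def)

text \<open>A 0/1 point of the dual polytope is extreme, since every entry of the polytope lies
  in [0, 1] and 0 and 1 are extreme points of that interval.\<close>
lemma zero_one_extreme:
  fixes g :: "real^'n::finite^'n"
  assumes g: "\<And>i j. g$i$j = 0 \<or> g$i$j = 1" and gd: "g \<in> dual_polytope"
  shows "g \<in> extE"
  unfolding extE_def extreme_point_of_def
proof (intro CollectI conjI ballI gd)
  fix a b :: "real^'n^'n" assume a: "a \<in> dual_polytope" and b: "b \<in> dual_polytope"
  show "g \<notin> open_segment a b"
  proof
    assume "g \<in> open_segment a b"
    then obtain u where u: "a \<noteq> b" "0 < u" "u < 1" "g = (1 - u) *\<^sub>R a + u *\<^sub>R b"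
      by (auto simp: in_segment)
    have "a$i$j = b$i$j" for i j
    proof -
      have e: "(1 - u) * a$i$j + u * b$i$j = g$i$j" using u(4) by simp
      have "0 \<le> a$i$j" "0 \<le> b$i$j" using a b by (auto simp: dual_iff nonneg_mat_def)
      moreover have "a$i$j \<le> 1" "b$i$j \<le> 1" using a b dual_entry_le1 by auto
      ultimately have p: "(1 - u) * a$i$j \<ge> 0" "u * b$i$j \<ge> 0"
        "(1 - u) * (1 - a$i$j) \<ge> 0" "u * (1 - b$i$j) \<ge> 0" using u(2,3) by auto
      have e': "(1 - u) * (1 - a$i$j) + u * (1 - b$i$j) = 1 - g$i$j"
        unfolding e[symmetric] by (simp add: algebra_simps)
      from g[of i j] show ?thesis
      proof
        assume "g$i$j = 0"
        then have "(1 - u) * a$i$j = 0" "u * b$i$j = 0" using e p by linarith+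
        then show ?thesis using u(2,3) by simp
      next
        assume "g$i$j = 1"
        then have "(1 - u) * (1 - a$i$j) = 0" "u * (1 - b$i$j) = 0" using e' p by linarith+
        then show ?thesis using u(2,3) by simp
      qed
    qed
    then show False using u(1) by (auto intro: mat_eqI)
  qed
qed

lemma row_vec_dual: "row_vec k \<in> dual_polytope"
  unfolding dual_iff
proof (intro conjI allI impI)
  show "nonneg_mat (row_vec k)" by (simp add: nonneg_mat_def)
  fix \<sigma> :: "'a \<Rightarrow> 'a"
  have "(\<Sum>i\<in>UNIV. row_vec k $ i $ (\<sigma> i)) = row_vec k $ k $ (\<sigma> k)"
    by (rule sum_single_support) simp
  then show "(\<Sum>i\<in>UNIV. row_vec k $ i $ (\<sigma> i)) \<le> 1" by simp
qed

lemma col_vec_dual: "col_vec k \<in> dual_polytope"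
  unfolding dual_iff
proof (intro conjI allI impI)
  show "nonneg_mat (col_vec k)" by (simp add: nonneg_mat_def)
  fix \<sigma> :: "'a \<Rightarrow> 'a" assume \<sigma>: "\<sigma> permutes UNIV"
  have "(\<Sum>i\<in>UNIV. col_vec k $ i $ (\<sigma> i)) = col_sum (perm_mat \<sigma>) k"
    by (simp add: col_sum_def perm_mat_def)
  then show "(\<Sum>i\<in>UNIV. col_vec k $ i $ (\<sigma> i)) \<le> 1" using col_sum_perm_mat[OF \<sigma>] by simp
qed

lemma row_vec_ext: "row_vec k \<in> extE"
  by (rule zero_one_extreme) (auto intro: row_vec_dual)

lemma col_vec_ext: "col_vec k \<in> extE"
  by (rule zero_one_extreme) (auto intro: col_vec_dual)

text \<open>Row and column indicators are maximal in the dual polytope: an element above r_k with a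
  positive entry (i, j) off row k would, along the transposition of i and j, exceed 1.\<close>
lemma row_vec_maximal:
  assumes x: "x \<in> dual_polytope" and le: "row_vec k \<le> x"
  shows "x = row_vec k"
proof (rule mat_eqI)
  fix i j
  have ge: "\<And>i j. row_vec k $ i $ j \<le> x$i$j" using le by (simp add: mat_le_iff)
  have nn: "0 \<le> x$i$j" using x by (auto simp: dual_iff nonneg_mat_def)
  show "x$i$j = row_vec k $ i $ j"
  proof (cases "i = k")
    case True
    then show ?thesis using ge[of i j] dual_entry_le1[OF x, of i j] by simp
  next
    case False
    define \<sigma> where "\<sigma> = Transposition.transpose i j"
    have \<sigma>: "\<sigma> permutes UNIV" "\<sigma> i = j" by (simp_all add: \<sigma>_def permutes_swap_id)
    have "x$i$j + x$k$(\<sigma> k) \<le> 1" using dual_two_entries[OF x \<sigma>(1) False] \<sigma>(2) by simp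
    moreover have "1 \<le> x$k$(\<sigma> k)" using ge[of k "\<sigma> k"] by simp
    ultimately show ?thesis using nn False by simp
  qed
qed

lemma col_vec_maximal:
  assumes x: "x \<in> dual_polytope" and le: "col_vec k \<le> x"
  shows "x = col_vec k"
proof (rule mat_eqI)
  fix i j
  have ge: "\<And>i j. col_vec k $ i $ j \<le> x$i$j" using le by (simp add: mat_le_iff)
  have nn: "0 \<le> x$i$j" using x by (auto simp: dual_iff nonneg_mat_def)
  show "x$i$j = col_vec k $ i $ j"
  proof (cases "j = k")
    case True
    then show ?thesis using ge[of i j] dual_entry_le1[OF x, of i j] by simp
  next
    case False
    define \<sigma> where "\<sigma> = Transposition.transpose i j"
    have \<sigma>: "\<sigma> permutes UNIV" by (simp add: \<sigma>_def permutes_swap_id)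
    define l where "l = inv \<sigma> k"
    have "\<sigma> l = k" unfolding l_def using \<sigma> by (meson permutes_inverses(1))
    moreover have "i \<noteq> l" using False \<open>\<sigma> l = k\<close> by (auto simp: \<sigma>_def)
    moreover have "\<sigma> i = j" by (simp add: \<sigma>_def)
    ultimately have "x$i$j + x$l$k \<le> 1" using dual_two_entries[OF x \<sigma>, of i l] by simp
    moreover have "1 \<le> x$l$k" using ge[of l k] by simp
    ultimately show ?thesis using nn False by simp
  qed
qed

text \<open>The maximal extreme points of the dual polytope are exactly the row and column
  indicators: every extreme point is a line matrix, hence lies below some r_k or c_k.\<close>
theorem Sstar_eq: "Sstar = range row_vec \<union> range (col_vec :: 'n::finite \<Rightarrow> real^'n^'n)"
proof
  show "Sstar \<subseteq> range row_vec \<union> range (col_vec :: 'n \<Rightarrow> real^'n^'n)"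
  proof
    fix \<xi> :: "real^'n^'n" assume "\<xi> \<in> Sstar"
    then have e: "\<xi> \<in> extE" and max: "\<And>\<xi>'. \<xi>' \<in> extE \<Longrightarrow> \<xi> \<le> \<xi>' \<Longrightarrow> \<xi> = \<xi>'"
      by (auto simp: Sstar_def)
    obtain k where x01: "\<And>i j. \<xi>$i$j = 0 \<or> \<xi>$i$j = 1"
      and k: "(\<forall>i j. \<xi>$i$j \<noteq> 0 \<longrightarrow> i = k) \<or> (\<forall>i j. \<xi>$i$j \<noteq> 0 \<longrightarrow> j = k)"
      using extE_line_mat[OF e] by (auto simp: line_mats_def)
    have le1: "\<xi>$i$j \<le> 1" for i j using x01[of i j] by auto
    from k have "\<xi> \<le> row_vec k \<or> \<xi> \<le> col_vec k"
    proof
      assume row: "\<forall>i j. \<xi>$i$j \<noteq> 0 \<longrightarrow> i = k"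
      have "\<xi>$i$j \<le> row_vec k $ i $ j" for i j
      proof (cases "i = k")
        case False
        then have "\<xi>$i$j = 0" using row by blast
        then show ?thesis by simp
      qed (use le1[of i j] in simp)
      then show ?thesis by (simp add: mat_le_iff)
    next
      assume col: "\<forall>i j. \<xi>$i$j \<noteq> 0 \<longrightarrow> j = k"
      have "\<xi>$i$j \<le> col_vec k $ i $ j" for i j
      proof (cases "j = k")
        case False
        then have "\<xi>$i$j = 0" using col by blast
        then show ?thesis by simp
      qed (use le1[of i j] in simp)
      then show ?thesis by (simp add: mat_le_iff)
    qed
    then have "\<xi> = row_vec k \<or> \<xi> = col_vec k" using max row_vec_ext col_vec_ext by blast
    then show "\<xi> \<in> range row_vec \<union> range col_vec" by blast
  qed
  have "row_vec k \<in> Sstar" "col_vec k \<in> Sstar" for k :: 'n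
    unfolding Sstar_def using row_vec_ext col_vec_ext
      row_vec_maximal[OF extE_dual] col_vec_maximal[OF extE_dual] by blast+
  then show "range row_vec \<union> range col_vec \<subseteq> (Sstar :: (real^'n^'n) set)" by blast
qed

section \<open>Complete loading for doubly stochastic arrival rates\<close>

text \<open>For doubly stochastic l every row and column indicator has l-value 1.\<close>
lemma Xi_doubly_stochastic:
  fixes l :: "real^'n::finite^'n"
  assumes rows: "\<And>i. row_sum l i = 1" and cols: "\<And>j. col_sum l j = 1"
  shows "Xi l = range row_vec \<union> range col_vec"
  unfolding Xi_def Sstar_eq using rows cols by (auto simp: mdot_row mdot_col)

text \<open>Every schedule serves exactly M = CARD('n) queues, and 1/M is the average of the row
  indicators, which all lie in Xi(l).\<close>
lemma complete_loading_doubly_stochastic: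
  fixes l :: "real^'n::finite^'n"
  assumes nn: "nonneg_mat l" and rows: "\<And>i. row_sum l i = 1" and cols: "\<And>j. col_sum l j = 1"
  shows "complete_loading l"
  unfolding complete_loading_def
proof
  show "l \<in> capacity_region"
    unfolding capacity_region_def using nn birkhoff[OF nn rows cols] by auto
  have "mdot ones_mat \<pi> = real CARD('n)" if "\<pi> \<in> (sched :: (real^'n^'n) set)" for \<pi>
    using that by (auto simp: sched_eq mdot_perm_mat ones_mat_def)
  then have "(\<lambda>\<pi>. mdot ones_mat \<pi>) ` (sched :: (real^'n^'n) set) = {real CARD('n)}"
    using sched_ne by auto
  then have max: "Max ((\<lambda>\<pi>. mdot ones_mat \<pi>) ` (sched :: (real^'n^'n) set)) = real CARD('n)"
    by simp
  have "(1 / real CARD('n)) *\<^sub>R ones_mat = (\<Sum>k\<in>UNIV. (1 / real CARD('n)) *\<^sub>R (row_vec k :: real^'n^'n))"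
  proof (rule mat_eqI)
    fix i j
    have "(\<Sum>k\<in>UNIV. (1 / real CARD('n)) *\<^sub>R (row_vec k :: real^'n^'n)) $ i $ j
        = (\<Sum>k\<in>UNIV. (1 / real CARD('n)) * (row_vec k $ i $ j))"
      by (simp add: sum_component)
    also have "\<dots> = 1 / real CARD('n)" by (subst sum_single_support[where k=i]) auto
    finally show "((1 / real CARD('n)) *\<^sub>R ones_mat) $ i $ j
        = (\<Sum>k\<in>UNIV. (1 / real CARD('n)) *\<^sub>R (row_vec k :: real^'n^'n)) $ i $ j"
      by (simp add: ones_mat_def)
  qed
  also have "\<dots> \<in> convex hull (Xi l)"
    by (rule convex_sum[OF finite convex_convex_hull])
      (auto simp: Xi_doubly_stochastic[OF rows cols] intro: hull_inc)
  finally show "(1 / Max ((\<lambda>\<pi>. mdot ones_mat \<pi>) ` (sched :: (real^'n^'n) set))) *\<^sub>R ones_mat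
      \<in> convex hull Xi l"
    by (simp only: max)
qed


section \<open>Strict convexity of the Lyapunov function\<close>

definition phi :: "real \<Rightarrow> real \<Rightarrow> real" where
  "phi \<alpha> t = t powr (1 + \<alpha>) / (1 + \<alpha>)"

lemma Lyap_phi: "Lyap \<alpha> q = (\<Sum>i\<in>UNIV. \<Sum>j\<in>UNIV. phi \<alpha> (q$i$j))"
  by (simp add: Lyap_def phi_def)

lemma phi_mono: "\<alpha> > 0 \<Longrightarrow> 0 \<le> x \<Longrightarrow> x \<le> y \<Longrightarrow> phi \<alpha> x \<le> phi \<alpha> y"
  unfolding phi_def by (intro divide_right_mono powr_mono2) auto

lemma phi_mvt:
  assumes "\<alpha> > 0" "0 \<le> a" "a < b"
  obtains z where "a < z" "z < b" "phi \<alpha> b - phi \<alpha> a = (b - a) * z powr \<alpha>"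
proof -
  have cont: "continuous_on {a..b} (phi \<alpha>)"
    unfolding phi_def using assms by (intro continuous_intros continuous_on_powr') auto
  have der: "DERIV (phi \<alpha>) z :> z powr \<alpha>" if "z > 0" for z
  proof -
    have "DERIV (\<lambda>z. z powr (1 + \<alpha>) / (1 + \<alpha>)) z :> (1 + \<alpha>) * z powr (1 + \<alpha> - 1) / (1 + \<alpha>)"
      by (intro DERIV_cdivide has_real_derivative_powr that)
    then show ?thesis using assms(1) unfolding phi_def by simp
  qed
  have "phi \<alpha> differentiable (at x)" if "a < x" "x < b" for x
    using der[of x] that assms(2) real_differentiable_def by fastforce
  then obtain d z where z: "a < z" "z < b" "DERIV (phi \<alpha>) z :> d" "phi \<alpha> b - phi \<alpha> a = (b - a) * d"
    using MVT[OF assms(3) cont] by blast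
  have "d = z powr \<alpha>" using DERIV_unique[OF z(3) der] z(1) assms(2) by simp
  then show ?thesis using that z by blast
qed

lemma phi_tangent_strict:
  assumes a: "\<alpha> > 0" and x: "0 \<le> x" and y: "0 \<le> y" and ne: "x \<noteq> y"
  shows "phi \<alpha> y + y powr \<alpha> * (x - y) < phi \<alpha> x"
proof (cases "y < x")
  case True
  obtain z where z: "y < z" "z < x" "phi \<alpha> x - phi \<alpha> y = (x - y) * z powr \<alpha>"
    using phi_mvt[OF a y True] by blast
  have "y powr \<alpha> < z powr \<alpha>" using powr_less_mono2[OF a y z(1)] .
  then have "(x - y) * y powr \<alpha> < (x - y) * z powr \<alpha>" using True by simp
  then show ?thesis using z(3) by (simp add: algebra_simps)
next
  case False
  then have lt: "x < y" using ne by simp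
  obtain z where z: "x < z" "z < y" "phi \<alpha> y - phi \<alpha> x = (y - x) * z powr \<alpha>"
    using phi_mvt[OF a x lt] by blast
  have "z powr \<alpha> < y powr \<alpha>" using powr_less_mono2[OF a _ z(2)] z(1) x by simp
  then have "(y - x) * z powr \<alpha> < (y - x) * y powr \<alpha>" using lt by simp
  then show ?thesis using z(3) by (simp add: algebra_simps)
qed

lemma phi_tangent:
  assumes "\<alpha> > 0" "0 \<le> x" "0 \<le> y"
  shows "phi \<alpha> y + y powr \<alpha> * (x - y) \<le> phi \<alpha> x"
  using phi_tangent_strict[OF assms] by (cases "x = y") force+

text \<open>The directional derivative of L_alpha at q towards r.\<close>
definition lin :: "real \<Rightarrow> real^'n::finite^'m::finite \<Rightarrow> real^'n^'m \<Rightarrow> real" where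
  "lin \<alpha> q r = (\<Sum>i\<in>UNIV. \<Sum>j\<in>UNIV. q$i$j powr \<alpha> * (r$i$j - q$i$j))"

lemma Lyap_tangent:
  assumes a: "\<alpha> > 0" and r: "nonneg_mat r" and q: "nonneg_mat q"
  shows "Lyap \<alpha> q + lin \<alpha> q r \<le> Lyap \<alpha> r"
proof -
  have "Lyap \<alpha> q + lin \<alpha> q r
      = (\<Sum>i\<in>UNIV. \<Sum>j\<in>UNIV. phi \<alpha> (q$i$j) + q$i$j powr \<alpha> * (r$i$j - q$i$j))"
    by (simp add: Lyap_phi lin_def sum.distrib)
  also have "\<dots> \<le> Lyap \<alpha> r"
    unfolding Lyap_phi using r q a by (intro sum_mono phi_tangent) (auto simp: nonneg_mat_def)
  finally show ?thesis .
qed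

lemma Lyap_tangent_strict:
  assumes a: "\<alpha> > 0" and r: "nonneg_mat r" and q: "nonneg_mat q" and "r \<noteq> q"
  shows "Lyap \<alpha> q + lin \<alpha> q r < Lyap \<alpha> r"
proof -
  obtain i0 j0 where ne: "r$i0$j0 \<noteq> q$i0$j0" using \<open>r \<noteq> q\<close> by (metis mat_eqI)
  define t where "t = (\<lambda>i j. phi \<alpha> (q$i$j) + q$i$j powr \<alpha> * (r$i$j - q$i$j))"
  have le: "t i j \<le> phi \<alpha> (r$i$j)" for i j
    unfolding t_def using r q a by (intro phi_tangent) (auto simp: nonneg_mat_def)
  have lt: "t i0 j0 < phi \<alpha> (r$i0$j0)"
    unfolding t_def using r q a ne by (intro phi_tangent_strict) (auto simp: nonneg_mat_def)
  have "Lyap \<alpha> q + lin \<alpha> q r = (\<Sum>i\<in>UNIV. \<Sum>j\<in>UNIV. t i j)"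
    by (simp add: Lyap_phi lin_def sum.distrib t_def)
  also have "\<dots> < Lyap \<alpha> r"
    unfolding Lyap_phi
  proof (rule sum_strict_mono_ex1)
    show "\<forall>i\<in>UNIV. (\<Sum>j\<in>UNIV. t i j) \<le> (\<Sum>j\<in>UNIV. phi \<alpha> (r$i$j))"
      using le by (simp add: sum_mono)
    have "(\<Sum>j\<in>UNIV. t i0 j) < (\<Sum>j\<in>UNIV. phi \<alpha> (r$i0$j))"
      using le lt by (intro sum_strict_mono_ex1) auto
    then show "\<exists>i\<in>UNIV. (\<Sum>j\<in>UNIV. t i j) < (\<Sum>j\<in>UNIV. phi \<alpha> (r$i$j))" by blast
  qed simp
  finally show ?thesis .
qed


section \<open>Minimisers of the Lyapunov function\<close>

definition Lyap_min :: "real \<Rightarrow> (real^'n::finite^'n) set \<Rightarrow> real^'n^'n \<Rightarrow> bool" where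
  "Lyap_min \<alpha> S q \<longleftrightarrow> q \<in> S \<and> (\<forall>r\<in>S. Lyap \<alpha> q \<le> Lyap \<alpha> r)"

lemma norm_mat_le: "norm (x::real^'n::finite^'m::finite) \<le> (\<Sum>i\<in>UNIV. \<Sum>j\<in>UNIV. \<bar>x$i$j\<bar>)"
proof -
  have "norm x \<le> (\<Sum>i\<in>UNIV. norm (x$i))" unfolding norm_vec_def by (rule L2_set_le_sum) simp
  also have "\<dots> \<le> (\<Sum>i\<in>UNIV. \<Sum>j\<in>UNIV. \<bar>x$i$j\<bar>)" by (intro sum_mono norm_le_l1_cart)
  finally show ?thesis .
qed

lemma Lyap_min_exists:
  fixes S :: "(real^'n::finite^'n) set"
  assumes a: "\<alpha> > 0" and cl: "closed S" and ne: "S \<noteq> {}"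
    and box: "\<And>r i j. r \<in> S \<Longrightarrow> 0 \<le> r$i$j \<and> r$i$j \<le> Q"
  obtains q where "Lyap_min \<alpha> S q"
proof -
  have "bounded S"
    unfolding bounded_iff
  proof (intro exI ballI)
    fix r assume r: "r \<in> S"
    have "norm r \<le> (\<Sum>i\<in>UNIV. \<Sum>j\<in>UNIV. \<bar>r$i$j\<bar>)" by (rule norm_mat_le)
    also have "\<dots> \<le> (\<Sum>i\<in>(UNIV::'n set). \<Sum>j\<in>(UNIV::'n set). Q)"
      using box[OF r] by (intro sum_mono) auto
    finally show "norm r \<le> (\<Sum>i\<in>(UNIV::'n set). \<Sum>j\<in>(UNIV::'n set). Q)" .
  qed
  then have "compact S" using cl by (simp add: compact_eq_bounded_closed)
  moreover have "continuous_on S (Lyap \<alpha>)"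
    unfolding Lyap_def using a box by (intro continuous_intros continuous_on_powr') auto
  ultimately show ?thesis
    using continuous_attains_inf[of S "Lyap \<alpha>"] ne that by (auto simp: Lyap_min_def)
qed

text \<open>By strict convexity, L_alpha has at most one minimiser on a convex set of nonnegative
  matrices: the midpoint of two distinct minimisers would be strictly better.\<close>
lemma Lyap_min_unique:
  assumes a: "\<alpha> > 0" and S: "convex S" "\<And>r. r \<in> S \<Longrightarrow> nonneg_mat r"
    and r1: "Lyap_min \<alpha> S r1" and r2: "Lyap_min \<alpha> S r2"
  shows "r1 = r2"
proof (rule ccontr)
  assume ne: "r1 \<noteq> r2"
  define m where "m = (1/2) *\<^sub>R r1 + (1/2) *\<^sub>R r2"
  have mS: "m \<in> S" using r1 r2 S(1) unfolding m_def Lyap_min_def by (intro convexD) auto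
  have nn: "nonneg_mat r1" "nonneg_mat r2" "nonneg_mat m" using r1 r2 mS S(2) by (auto simp: Lyap_min_def)
  have "r1 \<noteq> m"
  proof
    assume eq: "r1 = m"
    have "r1$i$j = r2$i$j" for i j
      using arg_cong[OF eq, of "\<lambda>x. x$i$j"] by (simp add: m_def)
    then have "r1 = r2" by (rule mat_eqI)
    then show False using ne by simp
  qed
  then have s1: "Lyap \<alpha> m + lin \<alpha> m r1 < Lyap \<alpha> r1" using Lyap_tangent_strict[OF a nn(1) nn(3)] by simp
  have s2: "Lyap \<alpha> m + lin \<alpha> m r2 \<le> Lyap \<alpha> r2" using Lyap_tangent[OF a nn(2) nn(3)] .
  have "lin \<alpha> m r1 + lin \<alpha> m r2 = 0"
    unfolding lin_def sum.distrib[symmetric] distrib_left[symmetric] by (simp add: m_def)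
  moreover have "Lyap \<alpha> r1 \<le> Lyap \<alpha> m" "Lyap \<alpha> r2 \<le> Lyap \<alpha> m"
    using r1 r2 mS by (auto simp: Lyap_min_def)
  ultimately show False using s1 s2 by linarith
qed


section \<open>The lifting map when Xi(l) consists of the row and column indicators\<close>

definition dominating :: "real^'n::finite^'n \<Rightarrow> (real^'n^'n) set" where
  "dominating q = {r. nonneg_mat r \<and> (\<forall>i. row_sum q i \<le> row_sum r i) \<and> (\<forall>j. col_sum q j \<le> col_sum r j)}"

lemma lift_feasible_dominating:
  assumes Xi: "Xi l = range row_vec \<union> range col_vec" and pos: "\<And>i j. l$i$j \<noteq> 0"
  shows "lift_feasible l q = dominating q"
proof -
  have "(\<forall>\<xi>\<in>Xi l. mdot \<xi> q \<le> mdot \<xi> r) \<longleftrightarrow>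
      (\<forall>i. row_sum q i \<le> row_sum r i) \<and> (\<forall>j. col_sum q j \<le> col_sum r j)" for r
    unfolding Xi ball_Un by (simp add: mdot_row mdot_col)
  then show ?thesis unfolding lift_feasible_def dominating_def using pos by auto
qed

lemma convex_dominating: "convex (dominating (q :: real^'n::finite^'n))"
  unfolding convex_def
proof (intro ballI allI impI)
  fix x y :: "real^'n^'n" and u v :: real
  assume x: "x \<in> dominating q" and y: "y \<in> dominating q" and uv: "0 \<le> u" "0 \<le> v" "u + v = 1"
  have "nonneg_mat (u *\<^sub>R x + v *\<^sub>R y)"
    using x y uv by (auto simp: dominating_def nonneg_mat_def)
  moreover have "row_sum q i \<le> row_sum (u *\<^sub>R x + v *\<^sub>R y) i" for i
  proof -
    have "row_sum q i = u * row_sum q i + v * row_sum q i" using uv(3) by algebra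
    also have "\<dots> \<le> u * row_sum x i + v * row_sum y i"
      using x y uv by (intro add_mono mult_left_mono) (auto simp: dominating_def)
    finally show ?thesis by (simp add: row_sum_combination)
  qed
  moreover have "col_sum q j \<le> col_sum (u *\<^sub>R x + v *\<^sub>R y) j" for j
  proof -
    have "col_sum q j = u * col_sum q j + v * col_sum q j" using uv(3) by algebra
    also have "\<dots> \<le> u * col_sum x j + v * col_sum y j"
      using x y uv by (intro add_mono mult_left_mono) (auto simp: dominating_def)
    finally show ?thesis by (simp add: col_sum_combination)
  qed
  ultimately show "u *\<^sub>R x + v *\<^sub>R y \<in> dominating q" by (simp add: dominating_def)
qed

text \<open>Truncating the entries of a dominating matrix at a level Q that bounds all row and column
  sums of q keeps it dominating: a truncated row contains an entry equal to Q.\<close>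
lemma truncate_dominating:
  assumes r: "r \<in> dominating q" and Q: "0 \<le> Q" "\<And>i. row_sum q i \<le> Q" "\<And>j. col_sum q j \<le> Q"
  shows "(\<chi> i j. min (r$i$j) Q) \<in> dominating q"
proof -
  define c where "c = (\<chi> i j. min (r$i$j) Q)"
  have c_nn: "nonneg_mat c" using r Q(1) by (simp add: c_def dominating_def nonneg_mat_def)
  then have c_le: "\<And>i j. c$i$j \<le> row_sum c i" "\<And>i j. c$i$j \<le> col_sum c j"
    by (simp_all add: entry_le_row_sum entry_le_col_sum)
  have "row_sum q i \<le> row_sum c i" for i
  proof (cases "\<exists>j. r$i$j > Q")
    case True
    then obtain j where "r$i$j > Q" by blast
    then have "c$i$j = Q" by (simp add: c_def)
    then show ?thesis using c_le(1)[of i j] Q(2)[of i] by linarith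
  next
    case False
    then have "row_sum c i = row_sum r i" by (simp add: row_sum_def c_def not_less)
    then show ?thesis using r by (simp add: dominating_def)
  qed
  moreover have "col_sum q j \<le> col_sum c j" for j
  proof (cases "\<exists>i. r$i$j > Q")
    case True
    then obtain i where "r$i$j > Q" by blast
    then have "c$i$j = Q" by (simp add: c_def)
    then show ?thesis using c_le(2)[of i j] Q(3)[of j] by linarith
  next
    case False
    then have "col_sum c j = col_sum r j" by (simp add: col_sum_def c_def not_less)
    then show ?thesis using r by (simp add: dominating_def)
  qed
  ultimately show ?thesis using c_nn by (simp add: dominating_def c_def)
qed

text \<open>A minimiser over the dominating set exists: restrict to entries at most the total mass Q
  of q, which loses nothing since truncation at Q keeps a matrix dominating and does not
  increase L_alpha.\<close>
lemma dominating_min_exists: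
  assumes a: "\<alpha> > 0" and q: "nonneg_mat q"
  obtains r where "Lyap_min \<alpha> (dominating q) r"
proof -
  define Q where "Q = (\<Sum>i\<in>UNIV. row_sum q i)"
  have rowQ: "row_sum q i \<le> Q" for i
    unfolding Q_def using q by (intro member_le_sum) (auto simp: row_sum_def nonneg_mat_def intro: sum_nonneg)
  have colQ: "col_sum q j \<le> Q" for j
    unfolding Q_def col_sum_def using entry_le_row_sum[OF q] by (intro sum_mono)
  have entQ: "q$i$j \<le> Q" for i j using rowQ[of i] entry_le_row_sum[OF q, of i j] by linarith
  have Q0: "0 \<le> Q" using entQ q by (meson nonneg_mat_def order_trans)
  define G where "G = dominating q \<inter> {r. \<forall>i j. r$i$j \<le> Q}"
  have "G = {r. \<forall>i j. 0 \<le> r$i$j} \<inter> {r. \<forall>i. row_sum q i \<le> (\<Sum>j\<in>UNIV. r$i$j)}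
      \<inter> {r. \<forall>j. col_sum q j \<le> (\<Sum>i\<in>UNIV. r$i$j)} \<inter> {r. \<forall>i j. r$i$j \<le> Q}"
    by (auto simp: G_def dominating_def nonneg_mat_def row_sum_def col_sum_def)
  also have "closed \<dots>"
    by (intro closed_Int closed_Collect_all closed_Collect_le continuous_intros)
  finally have "closed G" .
  moreover have "q \<in> G" using q entQ by (auto simp: G_def dominating_def)
  moreover have "0 \<le> r$i$j \<and> r$i$j \<le> Q" if "r \<in> G" for r i j
    using that by (auto simp: G_def dominating_def nonneg_mat_def)
  ultimately obtain r where r: "Lyap_min \<alpha> G r"
    using Lyap_min_exists[OF a, of G Q] by blast
  have "Lyap \<alpha> r \<le> Lyap \<alpha> r'" if r': "r' \<in> dominating q" for r'
  proof -
    have "(\<chi> i j. min (r'$i$j) Q) \<in> G"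
      using truncate_dominating[OF r' Q0 rowQ colQ] by (simp add: G_def)
    then have "Lyap \<alpha> r \<le> Lyap \<alpha> (\<chi> i j. min (r'$i$j) Q)" using r by (simp add: Lyap_min_def)
    also have "\<dots> \<le> Lyap \<alpha> r'" unfolding Lyap_phi using r' Q0
      by (intro sum_mono phi_mono a) (auto simp: dominating_def nonneg_mat_def)
    finally show ?thesis .
  qed
  moreover have "r \<in> dominating q" using r by (simp add: G_def Lyap_min_def)
  ultimately show ?thesis using that by (auto simp: Lyap_min_def)
qed

text \<open>The lift of q is the minimiser of L_alpha over the dominating set, so q is invariant iff
  it minimises L_alpha over the matrices dominating it.\<close>
lemma invariant_iff_Lyap_min:
  assumes feas: "lift_feasible l q = dominating q" and a: "\<alpha> > 0" and q: "nonneg_mat q"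
  shows "q \<in> invariant_states l \<alpha> \<longleftrightarrow> Lyap_min \<alpha> (dominating q) q"
proof -
  have unique: "r = r'" if "Lyap_min \<alpha> (dominating q) r" "Lyap_min \<alpha> (dominating q) r'" for r r'
    using Lyap_min_unique[OF a convex_dominating _ that] by (simp add: dominating_def)
  obtain r where r: "Lyap_min \<alpha> (dominating q) r" using dominating_min_exists[OF a q] .
  have "lift l \<alpha> q = r"
    unfolding lift_def feas using r unique by (intro the_equality) (auto simp: Lyap_min_def)
  then show ?thesis using q r unique by (auto simp: invariant_states_def)
qed

section \<open>First-order conditions at minimisers\<close>

text \<open>If q minimises L_alpha over S and q + e d stays in S for all small e > 0, then the
  directional derivative of L_alpha at q along d is nonnegative.  (The one-sided difference
  quotients are bounded below by the derivative at the perturbed point, which converges.)\<close>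
lemma Lyap_min_directional:
  assumes a: "\<alpha> > 0" and min: "Lyap_min \<alpha> S q" and S: "\<And>r. r \<in> S \<Longrightarrow> nonneg_mat r"
    and e0: "e0 > 0" and dir: "\<And>e. 0 < e \<Longrightarrow> e < e0 \<Longrightarrow> q + e *\<^sub>R d \<in> S"
  shows "0 \<le> (\<Sum>i\<in>UNIV. \<Sum>j\<in>UNIV. d$i$j * q$i$j powr \<alpha>)"
proof -
  have q: "nonneg_mat q" using min S by (simp add: Lyap_min_def)
  define g where "g = (\<lambda>e. \<Sum>i\<in>UNIV. \<Sum>j\<in>UNIV. d$i$j * (q$i$j + e * d$i$j) powr \<alpha>)"
  have "g e \<ge> 0" if e: "0 < e" "e < e0" for e
  proof -
    define r where "r = q + e *\<^sub>R d"
    have r: "r \<in> S" using dir[OF e] by (simp add: r_def)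
    have "Lyap \<alpha> r + lin \<alpha> r q \<le> Lyap \<alpha> q" using Lyap_tangent[OF a q S[OF r]] .
    moreover have "Lyap \<alpha> q \<le> Lyap \<alpha> r" using min r by (simp add: Lyap_min_def)
    moreover have "lin \<alpha> r q = - e * g e"
      unfolding lin_def g_def r_def by (simp add: sum_distrib_left sum_negf[symmetric] algebra_simps)
    ultimately have "e * g e \<ge> 0" by linarith
    then show ?thesis using e(1) by (simp add: zero_le_mult_iff)
  qed
  then have ev: "eventually (\<lambda>e. 0 \<le> g e) (at_right 0)"
    unfolding eventually_at_right_field using e0 by blast
  have "eventually (\<lambda>e. q$i$j + e * d$i$j \<ge> 0) (at_right 0)" for i j
    unfolding eventually_at_right_field using e0 dir S by (fastforce simp: nonneg_mat_def)
  then have "((\<lambda>e. (q$i$j + e * d$i$j) powr \<alpha>) \<longlongrightarrow> (q$i$j + 0 * d$i$j) powr \<alpha>) (at_right 0)" for i j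
    using a by (intro tendsto_powr' tendsto_intros) auto
  then have "(g \<longlongrightarrow> (\<Sum>i\<in>UNIV. \<Sum>j\<in>UNIV. d$i$j * q$i$j powr \<alpha>)) (at_right 0)"
    unfolding g_def by (intro tendsto_sum tendsto_mult tendsto_const) simp
  then show ?thesis using tendsto_lowerbound[OF _ ev] by simp
qed

definition unit_mat :: "'n::finite \<Rightarrow> 'n \<Rightarrow> real^'n^'n" where
  "unit_mat a b = (\<chi> x y. if x = a \<and> y = b then 1 else 0)"

text \<open>Moving mass around the rectangle (i,j), (l,k): add to (i,j) and (l,k), remove from
  (i,k) and (l,j).  This keeps every row and column sum.\<close>
definition cycle_move :: "'n::finite \<Rightarrow> 'n \<Rightarrow> 'n \<Rightarrow> 'n \<Rightarrow> real^'n^'n" where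
  "cycle_move i j l k = unit_mat i j + unit_mat l k - unit_mat i k - unit_mat l j"

text \<open>Moving mass from (l,k) to (l,j) and (i,k): raises row i and column j by one unit and
  keeps all other row and column sums.\<close>
definition path_move :: "'n::finite \<Rightarrow> 'n \<Rightarrow> 'n \<Rightarrow> 'n \<Rightarrow> real^'n^'n" where
  "path_move i j l k = unit_mat l j + unit_mat i k - unit_mat l k"

lemma sum_unit_mat: "(\<Sum>x\<in>UNIV. \<Sum>y\<in>UNIV. (unit_mat a b)$x$y * f x y) = f a b"
proof -
  have "(\<Sum>x\<in>UNIV. \<Sum>y\<in>UNIV. (unit_mat a b)$x$y * f x y) = (\<Sum>y\<in>UNIV. (unit_mat a b)$a$y * f a y)"
    by (rule sum_single_support) (simp add: unit_mat_def)
  also have "\<dots> = f a b" by (subst sum_single_support[where k=b]) (simp_all add: unit_mat_def)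
  finally show ?thesis .
qed

lemma sum_cycle_move:
  "(\<Sum>x\<in>UNIV. \<Sum>y\<in>UNIV. (cycle_move i j l k)$x$y * f x y) = f i j + f l k - f i k - f l j"
proof -
  have "(\<Sum>x\<in>UNIV. \<Sum>y\<in>UNIV. (cycle_move i j l k)$x$y * f x y) =
      (\<Sum>x\<in>UNIV. \<Sum>y\<in>UNIV. (unit_mat i j)$x$y * f x y) + (\<Sum>x\<in>UNIV. \<Sum>y\<in>UNIV. (unit_mat l k)$x$y * f x y)
      - (\<Sum>x\<in>UNIV. \<Sum>y\<in>UNIV. (unit_mat i k)$x$y * f x y) - (\<Sum>x\<in>UNIV. \<Sum>y\<in>UNIV. (unit_mat l j)$x$y * f x y)"
    by (simp add: cycle_move_def sum.distrib sum_subtractf algebra_simps)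
  then show ?thesis by (simp add: sum_unit_mat)
qed

lemma sum_path_move:
  "(\<Sum>x\<in>UNIV. \<Sum>y\<in>UNIV. (path_move i j l k)$x$y * f x y) = f l j + f i k - f l k"
proof -
  have "(\<Sum>x\<in>UNIV. \<Sum>y\<in>UNIV. (path_move i j l k)$x$y * f x y) =
      (\<Sum>x\<in>UNIV. \<Sum>y\<in>UNIV. (unit_mat l j)$x$y * f x y) + (\<Sum>x\<in>UNIV. \<Sum>y\<in>UNIV. (unit_mat i k)$x$y * f x y)
      - (\<Sum>x\<in>UNIV. \<Sum>y\<in>UNIV. (unit_mat l k)$x$y * f x y)"
    by (simp add: path_move_def sum.distrib sum_subtractf algebra_simps)
  then show ?thesis by (simp add: sum_unit_mat)
qed

lemma row_sum_unit_mat: "row_sum (unit_mat a b) x = (if x = a then 1 else 0)"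
  unfolding row_sum_def unit_mat_def by (cases "x = a") simp_all

lemma col_sum_unit_mat: "col_sum (unit_mat a b) y = (if y = b then 1 else 0)"
  unfolding col_sum_def unit_mat_def by (cases "y = b") simp_all

lemma row_sum_cycle_move: "row_sum (cycle_move i j l k) x = 0"
  by (simp add: cycle_move_def row_sum_def sum.distrib sum_subtractf row_sum_unit_mat[unfolded row_sum_def])

lemma col_sum_cycle_move: "col_sum (cycle_move i j l k) x = 0"
  by (simp add: cycle_move_def col_sum_def sum.distrib sum_subtractf col_sum_unit_mat[unfolded col_sum_def])

lemma row_sum_path_move: "row_sum (path_move i j l k) x = (if x = i then 1 else 0)"
  by (simp add: path_move_def row_sum_def sum.distrib sum_subtractf row_sum_unit_mat[unfolded row_sum_def])

lemma col_sum_path_move: "col_sum (path_move i j l k) y = (if y = j then 1 else 0)"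
  by (simp add: path_move_def col_sum_def sum.distrib sum_subtractf col_sum_unit_mat[unfolded col_sum_def])

lemma cycle_move_nonneg:
  assumes q: "nonneg_mat q" and "i \<noteq> l" and e: "0 \<le> e" "e \<le> q$i$k" "e \<le> q$l$j"
  shows "nonneg_mat (q + e *\<^sub>R cycle_move i j l k)"
  using assms by (auto simp: nonneg_mat_def cycle_move_def unit_mat_def)

lemma path_move_nonneg:
  assumes q: "nonneg_mat q" and e: "0 \<le> e" "e \<le> q$l$k"
  shows "nonneg_mat (q + e *\<^sub>R path_move i j l k)"
  using assms by (auto simp: nonneg_mat_def path_move_def unit_mat_def)

lemma cycle_condition:
  assumes a: "\<alpha> > 0" and min: "Lyap_min \<alpha> S q" and S: "\<And>r. r \<in> S \<Longrightarrow> nonneg_mat r"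
    and closed: "\<And>e. 0 < e \<Longrightarrow> nonneg_mat (q + e *\<^sub>R cycle_move i j l k) \<Longrightarrow>
                   q + e *\<^sub>R cycle_move i j l k \<in> S"
    and il: "i \<noteq> l" and pos: "q$i$k > 0" "q$l$j > 0"
  shows "q$i$k powr \<alpha> + q$l$j powr \<alpha> \<le> q$i$j powr \<alpha> + q$l$k powr \<alpha>"
proof -
  have q: "nonneg_mat q" using min S by (simp add: Lyap_min_def)
  have "0 \<le> (\<Sum>x\<in>UNIV. \<Sum>y\<in>UNIV. (cycle_move i j l k)$x$y * q$x$y powr \<alpha>)"
  proof (rule Lyap_min_directional[OF a min S])
    show "0 < min (q$i$k) (q$l$j)" using pos by simp
    show "q + e *\<^sub>R cycle_move i j l k \<in> S" if "0 < e" "e < min (q$i$k) (q$l$j)" for e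
      using that by (intro closed cycle_move_nonneg[OF q il]) auto
  qed
  then show ?thesis by (simp add: sum_cycle_move)
qed

lemma path_condition:
  assumes a: "\<alpha> > 0" and min: "Lyap_min \<alpha> (dominating q) q" and pos: "q$l$k > 0"
  shows "q$l$k powr \<alpha> \<le> q$l$j powr \<alpha> + q$i$k powr \<alpha>"
proof -
  have q: "nonneg_mat q" using min by (simp add: Lyap_min_def dominating_def)
  have "0 \<le> (\<Sum>x\<in>UNIV. \<Sum>y\<in>UNIV. (path_move i j l k)$x$y * q$x$y powr \<alpha>)"
  proof (rule Lyap_min_directional[OF a min _ pos])
    show "nonneg_mat r" if "r \<in> dominating q" for r using that by (simp add: dominating_def)
    show "q + e *\<^sub>R path_move i j l k \<in> dominating q" if "0 < e" "e < q$l$k" for e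
      using that path_move_nonneg[OF q, of e l k i j]
      by (simp add: dominating_def row_sum_add_scale col_sum_add_scale row_sum_path_move
          col_sum_path_move)
  qed
  then show ?thesis by (simp add: sum_path_move)
qed


section \<open>A sufficient condition for invariance\<close>

text \<open>If q powr alpha splits additively as u_i + v_j with u, v \<ge> 0, then the directional
  derivative of L_alpha at q towards any dominating r is a nonnegative combination of row and
  column sum excesses, so q minimises L_alpha over the matrices dominating it.\<close>
lemma additive_power_min:
  assumes a: "\<alpha> > 0" and q: "nonneg_mat q"
    and uv: "\<And>i. 0 \<le> u i" "\<And>j. 0 \<le> v j" "\<And>i j. q$i$j powr \<alpha> = u i + v j"
  shows "Lyap_min \<alpha> (dominating q) q"
  unfolding Lyap_min_def
proof (intro conjI ballI)
  show "q \<in> dominating q" using q by (simp add: dominating_def)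
  fix r assume r: "r \<in> dominating q"
  have "lin \<alpha> q r = (\<Sum>i\<in>UNIV. \<Sum>j\<in>UNIV. u i * (r$i$j - q$i$j))
      + (\<Sum>i\<in>UNIV. \<Sum>j\<in>UNIV. v j * (r$i$j - q$i$j))"
    unfolding lin_def uv(3) by (simp add: sum.distrib[symmetric] algebra_simps)
  also have "(\<Sum>i\<in>UNIV. \<Sum>j\<in>UNIV. v j * (r$i$j - q$i$j))
      = (\<Sum>j\<in>UNIV. \<Sum>i\<in>UNIV. v j * (r$i$j - q$i$j))"
    by (rule sum.swap)
  also have "(\<Sum>i\<in>UNIV. \<Sum>j\<in>UNIV. u i * (r$i$j - q$i$j)) + \<dots>
      = (\<Sum>i\<in>UNIV. u i * (row_sum r i - row_sum q i)) + (\<Sum>j\<in>UNIV. v j * (col_sum r j - col_sum q j))"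
    by (simp add: row_sum_def col_sum_def right_diff_distrib sum_distrib_left sum_subtractf)
  also have "\<dots> \<ge> 0"
    using r uv by (intro add_nonneg_nonneg sum_nonneg mult_nonneg_nonneg) (auto simp: dominating_def)
  finally have "lin \<alpha> q r \<ge> 0" .
  moreover have "Lyap \<alpha> q + lin \<alpha> q r \<le> Lyap \<alpha> r"
    using Lyap_tangent[OF a _ q] r by (simp add: dominating_def)
  ultimately show "Lyap \<alpha> q \<le> Lyap \<alpha> r" by linarith
qed

text \<open>A nonnegative function on pairs satisfying the exchange identity
  f i j + f l k = f i k + f l j splits as u_i + v_j with u, v \<ge> 0: normalise
  u by its minimum.\<close>
lemma exchange_additive:
  fixes f :: "'n::finite \<Rightarrow> 'n \<Rightarrow> real"
  assumes nn: "\<And>i j. 0 \<le> f i j" and ex: "\<And>i j l k. f i j + f l k = f i k + f l j"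
  obtains u v where "\<And>i. 0 \<le> u i" "\<And>j. 0 \<le> v j" "\<And>i j. f i j = u i + v j"
proof -
  fix o0 :: 'n
  define u0 where "u0 = (\<lambda>i. f i o0)"
  define c where "c = Min (range u0)"
  have "c \<in> range u0" unfolding c_def by (rule Min_in) auto
  then obtain i0 where i0: "u0 i0 = c" by auto
  have add: "f i j = (u0 i - c) + (f i0 j)" for i j
    using ex[of i j i0 o0] i0 by (simp add: u0_def)
  have "0 \<le> u0 i - c" for i unfolding c_def by simp
  then show ?thesis using that[of "\<lambda>i. u0 i - c" "f i0"] nn add by blast
qed

lemma exchange_invariant:
  assumes feas: "lift_feasible l q = dominating q" and a: "\<alpha> > 0" and q: "nonneg_mat q"
    and ex: "\<And>i j l k. q$i$j powr \<alpha> + q$l$k powr \<alpha> = q$i$k powr \<alpha> + q$l$j powr \<alpha>"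
  shows "q \<in> invariant_states l \<alpha>"
proof -
  obtain u v where "\<And>i. 0 \<le> u i" "\<And>j. 0 \<le> v j" "\<And>i j. q$i$j powr \<alpha> = u i + v j"
    using exchange_additive[of "\<lambda>i j. q$i$j powr \<alpha>"] ex by auto
  then show ?thesis
    using invariant_iff_Lyap_min[OF feas a q] additive_power_min[OF a q] by blast
qed

lemma Wmap_Inl [simp]: "Wmap q $ Inl i = row_sum q i"
  by (simp add: Wmap_def mdot_row)

lemma Wmap_Inr [simp]: "Wmap q $ Inr j = col_sum q j"
  by (simp add: Wmap_def mdot_col)

lemma Wmap_eq_iff: "Wmap q = w \<longleftrightarrow> (\<forall>i. row_sum q i = w$Inl i) \<and> (\<forall>j. col_sum q j = w$Inr j)"
proof
  assume "Wmap q = w"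
  then show "(\<forall>i. row_sum q i = w$Inl i) \<and> (\<forall>j. col_sum q j = w$Inr j)"
    by (auto simp: Wmap_def mdot_row mdot_col)
next
  assume h: "(\<forall>i. row_sum q i = w$Inl i) \<and> (\<forall>j. col_sum q j = w$Inr j)"
  show "Wmap q = w"
  proof (subst vec_eq_iff, intro allI)
    fix k :: "'a + 'a" show "Wmap q $ k = w $ k"
      using h by (cases k) (simp_all add: Wmap_def mdot_row mdot_col)
  qed
qed

lemma Wmap_cycle_move: "Wmap (q + e *\<^sub>R cycle_move i j l k) = Wmap q"
  by (simp add: Wmap_eq_iff row_sum_add_scale col_sum_add_scale row_sum_cycle_move
      col_sum_cycle_move)

section \<open>Part (i): the relative interior is reached for small alpha\<close>

definition fiber :: "real^('n::finite + 'n) \<Rightarrow> (real^'n^'n) set" where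
  "fiber w = {q. nonneg_mat q \<and> Wmap q = w}"

lemma fiber_nonneg: "r \<in> fiber w \<Longrightarrow> nonneg_mat r"
  by (simp add: fiber_def)

lemma fiber_cycle_closed:
  "Wmap q = w \<Longrightarrow> nonneg_mat (q + e *\<^sub>R cycle_move i j l k) \<Longrightarrow>
    q + e *\<^sub>R cycle_move i j l k \<in> fiber w"
  by (simp add: fiber_def Wmap_cycle_move)

lemma Wmap_nonneg: "nonneg_mat q \<Longrightarrow> 0 \<le> Wmap q $ k"
  by (cases k) (auto simp: row_sum_def col_sum_def nonneg_mat_def intro!: sum_nonneg)

text \<open>Points of the relative interior of the workload cone have positive coordinates: the
  cone contains W(1) > 0, and moving from w slightly away from W(1) stays inside, which is
  impossible if some coordinate of w vanishes.\<close>
lemma rel_interior_Wmap_pos: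
  fixes w :: "real^('n::finite + 'n)"
  assumes w: "w \<in> rel_interior (Wmap ` {q. nonneg_mat q})"
  shows "w$k > 0"
proof (rule ccontr)
  define S where "S = Wmap ` {q :: real^'n^'n. nonneg_mat q}"
  assume "\<not> w$k > 0"
  have wS: "w \<in> S" using w rel_interior_subset unfolding S_def by blast
  moreover have "0 \<le> w$k" using wS Wmap_nonneg unfolding S_def by blast
  ultimately have wk: "w$k = 0" using \<open>\<not> w$k > 0\<close> by simp
  obtain e where e: "e > 0" "cball w e \<inter> affine hull S \<subseteq> S"
    using w unfolding S_def[symmetric] mem_rel_interior_cball by blast
  define one where "one = Wmap (ones_mat :: real^'n^'n)"
  have oneS: "one \<in> S" unfolding S_def one_def by (simp add: ones_mat_def nonneg_mat_def)
  have one_k: "one$k = real CARD('n)"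
    by (cases k) (simp_all add: one_def row_sum_def col_sum_def ones_mat_def)
  define t where "t = e / (norm (one - w) + 1)"
  have d: "norm (one - w) + 1 > 0" by (simp add: add_nonneg_pos)
  have t_pos: "t > 0" using e(1) d by (simp add: t_def)
  have "t * norm (one - w) \<le> t * (norm (one - w) + 1)" using t_pos by simp
  also have "\<dots> = e" using d by (simp add: t_def)
  finally have t: "t > 0" "t * norm (one - w) \<le> e" using t_pos by auto
  define z where "z = (1 + t) *\<^sub>R w + (- t) *\<^sub>R one"
  have "z \<in> affine hull S"
    unfolding z_def by (rule mem_affine[OF affine_affine_hull]) (auto intro: hull_inc wS oneS)
  moreover have "dist w z = t * norm (one - w)"
  proof -
    have "w - z = t *\<^sub>R (one - w)" by (simp add: z_def algebra_simps)
    then show ?thesis using t(1) by (simp add: dist_norm)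
  qed
  ultimately have "z \<in> S" using e(2) t(2) by auto
  then have "0 \<le> z$k" using Wmap_nonneg unfolding S_def by blast
  moreover have "z$k = - t * real CARD('n)" using wk one_k by (simp add: z_def)
  ultimately show False using t(1) by (simp add: mult_le_0_iff)
qed

lemma powr_lt_2_small:
  fixes K :: real
  assumes K: "K > 0" and a: "0 < \<alpha>" "\<alpha> < ln 2 / ln (K + 1)"
  shows "K powr \<alpha> < 2"
proof -
  have "\<alpha> * ln (K + 1) < ln 2" using a(2) K by (simp add: pos_less_divide_eq)
  then have "(K + 1) powr \<alpha> < 2" using K by (simp add: powr_def ln_less_cancel_iff[symmetric])
  moreover have "K powr \<alpha> \<le> (K + 1) powr \<alpha>" using K a(1) by (intro powr_mono2) auto
  ultimately show ?thesis by linarith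
qed

lemma exists_above_average: "\<exists>k. (\<Sum>y\<in>UNIV. f y) \<le> real CARD('n::finite) * f (k::'n)"
proof -
  have "Max (range f) \<in> range f" by (rule Max_in) auto
  then obtain k where k: "f k = Max (range f)" by (metis rangeE)
  have "(\<Sum>y\<in>UNIV. f y) \<le> of_nat (card (UNIV::'n set)) * f k"
    by (rule sum_bounded_above) (simp add: k)
  then show ?thesis by blast
qed

text \<open>If q_ij = 0, pick
  large entries q_ik, q_lj (at least m/M, m the smallest workload); the cycle condition then
  gives 2 (m/M)^alpha \<le> q_lk^alpha \<le> Tot^alpha, contradicting the choice of alpha.\<close>
lemma fiber_min_full_support:
  fixes q :: "real^'n::finite^'n"
  assumes a: "\<alpha> > 0" and min: "Lyap_min \<alpha> (fiber w) q"
    and m: "m > 0" "\<And>k. m \<le> w$k" and Tot: "\<And>i. w$Inl i \<le> Tot"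
    and small: "Tot powr \<alpha> < 2 * (m / CARD('n)) powr \<alpha>"
  shows "q$i$j > 0"
proof (rule ccontr)
  define M where "M = real CARD('n)"
  have M: "M > 0" by (simp add: M_def)
  have q: "nonneg_mat q" "Wmap q = w" using min by (auto simp: Lyap_min_def fiber_def)
  have large_row: "\<exists>k. m / M \<le> q$i$k" for i
  proof -
    obtain k where "(\<Sum>y\<in>UNIV. q$i$y) \<le> M * q$i$k" using exists_above_average unfolding M_def by blast
    moreover have "(\<Sum>y\<in>UNIV. q$i$y) = w$Inl i" using q(2) by (auto simp: Wmap_eq_iff row_sum_def)
    ultimately have "m \<le> M * q$i$k" using m(2)[of "Inl i"] by linarith
    then show ?thesis using M by (auto simp: pos_divide_le_eq mult.commute)
  qed
  have large_col: "\<exists>l. m / M \<le> q$l$j" for j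
  proof -
    obtain l where "(\<Sum>y\<in>UNIV. q$y$j) \<le> M * q$l$j" using exists_above_average unfolding M_def by blast
    moreover have "(\<Sum>y\<in>UNIV. q$y$j) = w$Inr j" using q(2) by (auto simp: Wmap_eq_iff col_sum_def)
    ultimately have "m \<le> M * q$l$j" using m(2)[of "Inr j"] by linarith
    then show ?thesis using M by (auto simp: pos_divide_le_eq mult.commute)
  qed
  assume "\<not> q$i$j > 0"
  moreover have "0 \<le> q$i$j" using q(1) by (simp add: nonneg_mat_def)
  ultimately have z: "q$i$j = 0" by simp
  obtain k l where k: "m / M \<le> q$i$k" and l: "m / M \<le> q$l$j" using large_row large_col by blast
  have pos: "q$i$k > 0" "q$l$j > 0" using k l m(1) M by (smt (verit) divide_pos_pos)+
  have il: "i \<noteq> l" using z pos(2) by auto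
  have "q$i$k powr \<alpha> + q$l$j powr \<alpha> \<le> q$i$j powr \<alpha> + q$l$k powr \<alpha>"
    by (rule cycle_condition[OF a min fiber_nonneg fiber_cycle_closed[OF q(2)] il pos])
  moreover have "(m / M) powr \<alpha> \<le> q$i$k powr \<alpha>" "(m / M) powr \<alpha> \<le> q$l$j powr \<alpha>"
    using k l m(1) M a by (auto intro!: powr_mono2)
  moreover have "q$l$k powr \<alpha> \<le> Tot powr \<alpha>"
  proof -
    have "q$l$k \<le> row_sum q l" by (rule entry_le_row_sum[OF q(1)])
    also have "\<dots> \<le> Tot" using q(2) Tot[of l] by (auto simp: Wmap_eq_iff)
    finally show ?thesis using q(1) a by (intro powr_mono2) (auto simp: nonneg_mat_def)
  qed
  ultimately show False using small z by (simp add: M_def)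
qed

lemma fiber_min_exists:
  assumes a: "\<alpha> > 0" and q0: "q0 \<in> fiber w" and Tot: "\<And>i. w$Inl i \<le> Tot"
  obtains q where "Lyap_min \<alpha> (fiber w) q"
proof -
  have "fiber w = {q. \<forall>i j. 0 \<le> q$i$j} \<inter> {q. \<forall>i. (\<Sum>j\<in>UNIV. q$i$j) = w$Inl i}
      \<inter> {q. \<forall>j. (\<Sum>i\<in>UNIV. q$i$j) = w$Inr j}"
    by (auto simp: fiber_def Wmap_eq_iff nonneg_mat_def row_sum_def col_sum_def)
  also have "closed \<dots>"
    by (intro closed_Int closed_Collect_all closed_Collect_le closed_Collect_eq continuous_intros)
  finally have "closed (fiber w)" .
  moreover have "0 \<le> q$i$j \<and> q$i$j \<le> Tot" if "q \<in> fiber w" for q i j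
    using that entry_le_row_sum[of q i j] Tot[of i]
    by (auto simp: fiber_def nonneg_mat_def Wmap_eq_iff)
  ultimately show ?thesis using Lyap_min_exists[OF a, of "fiber w" Tot] q0 that by blast
qed

text \<open>At a minimiser on a fibre with full support, the cycle condition applies in both
  directions, so the exchange identity holds.\<close>
lemma fiber_min_exchange:
  assumes a: "\<alpha> > 0" and min: "Lyap_min \<alpha> (fiber w) q" and full: "\<And>i j. q$i$j > 0"
  shows "q$i$j powr \<alpha> + q$l$k powr \<alpha> = q$i$k powr \<alpha> + q$l$j powr \<alpha>"
proof (cases "i = l")
  case False
  have "Wmap q = w" using min by (simp add: Lyap_min_def fiber_def)
  note cycle = cycle_condition[OF a min fiber_nonneg fiber_cycle_closed[OF this] False full full]
  have "q$i$k powr \<alpha> + q$l$j powr \<alpha> \<le> q$i$j powr \<alpha> + q$l$k powr \<alpha>" by (rule cycle)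
  moreover have "q$i$j powr \<alpha> + q$l$k powr \<alpha> \<le> q$i$k powr \<alpha> + q$l$j powr \<alpha>" by (rule cycle)
  ultimately show ?thesis by linarith
qed simp

text \<open>With m the smallest and Tot the total row workload, every alpha below
  ln 2 / ln (K + 1), K = Tot M / m, satisfies Tot^alpha < 2 (m/M)^alpha; the minimiser on the
  fibre of w then has full support and is invariant.\<close>
theorem rel_interior_invariant_small_alpha:
  fixes l :: "real^'n::finite^'n"
  assumes feas: "\<And>q. lift_feasible l q = dominating q"
    and w: "w \<in> rel_interior (Wmap ` {q. nonneg_mat q})"
  shows "\<exists>\<alpha>0>0. \<forall>\<alpha>. 0 < \<alpha> \<and> \<alpha> < \<alpha>0 \<longrightarrow> w \<in> Wmap ` invariant_states l \<alpha>"
proof -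
  have pos: "\<And>k. w$k > 0" using rel_interior_Wmap_pos[OF w] .
  obtain q0 :: "real^'n^'n" where q0: "q0 \<in> fiber w"
    using w rel_interior_subset by (fastforce simp: fiber_def)
  define m where "m = Min (range (\<lambda>k. w$k))"
  have m: "m > 0" "\<And>k. m \<le> w$k"
    using Min_in[of "range (\<lambda>k. w$k)"] pos by (auto simp: m_def)
  define Tot where "Tot = (\<Sum>i\<in>UNIV. w$Inl i)"
  have Tot: "w$Inl i \<le> Tot" for i
    unfolding Tot_def using pos by (intro member_le_sum) (auto intro: less_imp_le)
  define K where "K = Tot * real CARD('n) / m"
  have K: "K > 0" using Tot[of undefined] pos[of "Inl undefined"] m by (simp add: K_def)
  define \<alpha>0 where "\<alpha>0 = ln 2 / ln (K + 1)"
  have "w \<in> Wmap ` invariant_states l \<alpha>" if a: "0 < \<alpha>" "\<alpha> < \<alpha>0" for \<alpha>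
  proof -
    have "Tot = K * (m / CARD('n))" using m by (simp add: K_def)
    then have "Tot powr \<alpha> = K powr \<alpha> * (m / CARD('n)) powr \<alpha>"
      using K m by (simp only:) (rule powr_mult; simp)
    moreover have "K powr \<alpha> < 2" using powr_lt_2_small[OF K a(1)] a(2) by (simp add: \<alpha>0_def)
    moreover have "(m / CARD('n)) powr \<alpha> > 0" using m by simp
    ultimately have small: "Tot powr \<alpha> < 2 * (m / CARD('n)) powr \<alpha>" by simp
    obtain q where min: "Lyap_min \<alpha> (fiber w) q" using fiber_min_exists[OF a(1) q0 Tot] .
    then have q: "nonneg_mat q" "Wmap q = w" by (auto simp: Lyap_min_def fiber_def)
    have "\<And>i j. q$i$j > 0" using fiber_min_full_support[OF a(1) min m Tot small] .
    then have "\<And>i j l k. q$i$j powr \<alpha> + q$l$k powr \<alpha> = q$i$k powr \<alpha> + q$l$j powr \<alpha>"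
      by (rule fiber_min_exchange[OF a(1) min])
    then have "q \<in> invariant_states l \<alpha>" by (rule exchange_invariant[OF feas a(1) q(1)])
    then show ?thesis using q(2) by blast
  qed
  moreover have "\<alpha>0 > 0" using K by (simp add: \<alpha>0_def)
  ultimately show ?thesis by blast
qed

section \<open>Part (ii): strict monotonicity for a 2 x 2 switch\<close>

lemma dominating_cycle_closed:
  "nonneg_mat (q + e *\<^sub>R cycle_move i j l k) \<Longrightarrow> q + e *\<^sub>R cycle_move i j l k \<in> dominating q"
  by (simp add: dominating_def row_sum_add_scale col_sum_add_scale row_sum_cycle_move col_sum_cycle_move)

text \<open>A power-sum inequality s^beta \<le> y^beta + z^beta persists for smaller exponents, since
  (y/s)^gamma + (z/s)^gamma decreases in gamma when y, z < s.\<close>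
lemma powr_sum_bound_mono:
  fixes s y z :: real
  assumes nn: "0 \<le> s" "0 \<le> y" "0 \<le> z" and ab: "0 < \<alpha>" "\<alpha> < \<beta>"
    and h: "s powr \<beta> \<le> y powr \<beta> + z powr \<beta>"
  shows "s powr \<alpha> \<le> y powr \<alpha> + z powr \<alpha>"
proof -
  consider "s = 0" | "y \<ge> s" | "z \<ge> s" | "0 < s" "y < s" "z < s" using nn by linarith
  then show ?thesis
  proof cases
    case 2
    then have "s powr \<alpha> \<le> y powr \<alpha>" using nn ab by (intro powr_mono2) auto
    then show ?thesis using powr_ge_zero[of z \<alpha>] by linarith
  next
    case 3
    then have "s powr \<alpha> \<le> z powr \<alpha>" using nn ab by (intro powr_mono2) auto
    then show ?thesis using powr_ge_zero[of y \<alpha>] by linarith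
  next
    case 4
    have sp: "s powr \<beta> > 0" "s powr \<alpha> > 0" using 4 by auto
    have "1 \<le> y powr \<beta> / s powr \<beta> + z powr \<beta> / s powr \<beta>"
      using h sp by (simp add: add_divide_distrib[symmetric] le_divide_eq)
    also have "y powr \<beta> / s powr \<beta> = (y / s) powr \<beta>" by (simp add: powr_divide)
    also have "z powr \<beta> / s powr \<beta> = (z / s) powr \<beta>" by (simp add: powr_divide)
    also have "(y / s) powr \<beta> \<le> (y / s) powr \<alpha>" using 4 nn ab by (intro powr_mono') auto
    also have "(z / s) powr \<beta> \<le> (z / s) powr \<alpha>" using 4 nn ab by (intro powr_mono') auto
    finally have "1 \<le> (y / s) powr \<alpha> + (z / s) powr \<alpha>" by simp
    also have "\<dots> = (y powr \<alpha> + z powr \<alpha>) / s powr \<alpha>" by (simp add: powr_divide add_divide_distrib)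
    finally show ?thesis using sp by (simp add: le_divide_eq)
  qed simp
qed

text \<open>The exchange imbalance of a 2 x 2 matrix with diagonal x11, x22 and off-diagonal
  x12, x21 after moving t units of mass onto the diagonal.\<close>
definition imbalance :: "real \<Rightarrow> real \<Rightarrow> real \<Rightarrow> real \<Rightarrow> real \<Rightarrow> real \<Rightarrow> real" where
  "imbalance \<gamma> x11 x22 x12 x21 t = (x11 + t) powr \<gamma> + (x22 + t) powr \<gamma> - (x12 - t) powr \<gamma> - (x21 - t) powr \<gamma>"

text \<open>If the diagonal is dominated in the beta-sense (the conditions satisfied by a beta-invariant
  state), then after emptying the smaller diagonal entry it is dominated in the alpha-sense:
  the emptied matrix has a single diagonal entry s, and s^beta \<le> x12'^beta + x21'^beta passes
  to alpha.\<close>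
lemma imbalance_emptied_le:
  fixes x11 x22 x12 x21 :: real
  assumes nn: "0 \<le> x11" "0 \<le> x22" "0 \<le> x12" "0 \<le> x21" and ab: "0 < \<alpha>" "\<alpha> < \<beta>"
    and both: "x11 > 0 \<Longrightarrow> x22 > 0 \<Longrightarrow> x11 powr \<beta> + x22 powr \<beta> \<le> x12 powr \<beta> + x21 powr \<beta>"
    and one22: "x22 > 0 \<Longrightarrow> x22 powr \<beta> \<le> x12 powr \<beta> + x21 powr \<beta>"
    and one11: "x11 > 0 \<Longrightarrow> x11 powr \<beta> \<le> x12 powr \<beta> + x21 powr \<beta>"
  shows "imbalance \<alpha> x11 x22 x12 x21 (- min x11 x22) \<le> 0"
proof -
  define c where "c = min x11 x22"
  define p11 where "p11 = x11 - c"
  define p22 where "p22 = x22 - c"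
  define p12 where "p12 = x12 + c"
  define p21 where "p21 = x21 + c"
  define s where "s = p11 + p22"
  have c0: "0 \<le> c" using nn by (simp add: c_def)
  have pn: "0 \<le> p11" "0 \<le> p22" "0 \<le> p12" "0 \<le> p21"
    using nn c0 by (auto simp: p11_def p22_def p12_def p21_def c_def)
  have "p11 = 0 \<or> p22 = 0" by (auto simp: p11_def p22_def c_def min_def)
  then have s_pow: "s powr \<gamma> = p11 powr \<gamma> + p22 powr \<gamma>" for \<gamma> by (auto simp: s_def)
  have "s powr \<beta> \<le> p12 powr \<beta> + p21 powr \<beta>"
  proof (cases "x11 > 0 \<and> x22 > 0")
    case True
    have "p11 powr \<beta> \<le> x11 powr \<beta>" "p22 powr \<beta> \<le> x22 powr \<beta>"
      "x12 powr \<beta> \<le> p12 powr \<beta>" "x21 powr \<beta> \<le> p21 powr \<beta>"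
      using pn nn c0 ab by (auto simp: p11_def p22_def p12_def p21_def intro!: powr_mono2)
    then show ?thesis using both True s_pow[of \<beta>] by linarith
  next
    case False
    then have "c = 0" using nn by (auto simp: c_def min_def)
    then have "p11 = x11" "p22 = x22" "p12 = x12" "p21 = x21"
      by (simp_all add: p11_def p22_def p12_def p21_def)
    moreover have "x11 = 0 \<or> x22 = 0" using False nn by auto
    ultimately show ?thesis
      using one11 one22 nn by (cases "x11 = 0"; cases "x22 = 0") (auto simp: s_def)
  qed
  then have "s powr \<alpha> \<le> p12 powr \<alpha> + p21 powr \<alpha>"
    by (rule powr_sum_bound_mono[rotated 3, OF ab]) (use pn in \<open>simp_all add: s_def\<close>)
  then show ?thesis using s_pow[of \<alpha>]
    by (simp add: imbalance_def c_def[symmetric] p11_def[symmetric] p22_def[symmetric] p12_def p21_def)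
qed

text \<open>If both the diagonal and the off-diagonal pair are dominated in the beta-sense, the
  alpha-imbalance changes sign between emptying the diagonal and emptying the off-diagonal,
  hence has a root in between.\<close>
lemma imbalance_root:
  fixes x11 x22 x12 x21 :: real
  assumes nn: "0 \<le> x11" "0 \<le> x22" "0 \<le> x12" "0 \<le> x21" and ab: "0 < \<alpha>" "\<alpha> < \<beta>"
    and "x11 > 0 \<Longrightarrow> x22 > 0 \<Longrightarrow> x11 powr \<beta> + x22 powr \<beta> \<le> x12 powr \<beta> + x21 powr \<beta>"
      "x22 > 0 \<Longrightarrow> x22 powr \<beta> \<le> x12 powr \<beta> + x21 powr \<beta>"
      "x11 > 0 \<Longrightarrow> x11 powr \<beta> \<le> x12 powr \<beta> + x21 powr \<beta>"
    and "x12 > 0 \<Longrightarrow> x21 > 0 \<Longrightarrow> x12 powr \<beta> + x21 powr \<beta> \<le> x11 powr \<beta> + x22 powr \<beta>"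
      "x21 > 0 \<Longrightarrow> x21 powr \<beta> \<le> x11 powr \<beta> + x22 powr \<beta>"
      "x12 > 0 \<Longrightarrow> x12 powr \<beta> \<le> x11 powr \<beta> + x22 powr \<beta>"
  obtains t where "- min x11 x22 \<le> t" "t \<le> min x12 x21" "imbalance \<alpha> x11 x22 x12 x21 t = 0"
proof -
  have lo: "imbalance \<alpha> x11 x22 x12 x21 (- min x11 x22) \<le> 0"
    by (rule imbalance_emptied_le[OF nn ab assms(7-9)])
  have "imbalance \<alpha> x12 x21 x11 x22 (- min x12 x21) \<le> 0"
    by (rule imbalance_emptied_le[OF nn(3,4,1,2) ab assms(10-12)])
  then have hi: "0 \<le> imbalance \<alpha> x11 x22 x12 x21 (min x12 x21)"
    unfolding imbalance_def by simp
  have "continuous_on {- min x11 x22..min x12 x21} (imbalance \<alpha> x11 x22 x12 x21)"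
    unfolding imbalance_def using ab nn by (intro continuous_intros continuous_on_powr') auto
  moreover have "- min x11 x22 \<le> min x12 x21" using nn by (simp add: min_def)
  ultimately show ?thesis
    using IVT'[of "imbalance \<alpha> x11 x22 x12 x21" "- min x11 x22" 0 "min x12 x21"] lo hi that by auto
qed

lemma exchange_two:
  assumes "e1 \<noteq> e2" and U: "UNIV = {e1, e2}"
    and h: "f e1 e1 + f e2 e2 = f e1 e2 + (f e2 e1 :: real)"
  shows "f i j + f l k = f i k + f l j"
proof -
  have d: "\<And>x. x = e1 \<or> x = e2" using U by auto
  show ?thesis using d[of i] d[of j] d[of l] d[of k] by (elim disjE) (use h in auto)
qed

lemma exchange_two_invariant:
  fixes e1 e2 :: "'n::finite"
  assumes feas: "lift_feasible l q = dominating q" and a: "\<alpha> > 0"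
    and e12: "e1 \<noteq> e2" and U: "UNIV = {e1, e2}" and q: "nonneg_mat q"
    and diag: "q$e1$e1 powr \<alpha> + q$e2$e2 powr \<alpha> = q$e1$e2 powr \<alpha> + q$e2$e1 powr \<alpha>"
  shows "q \<in> invariant_states l \<alpha>"
  by (rule exchange_invariant[OF feas a q], rule exchange_two[OF e12 U, of "\<lambda>i j. q$i$j powr \<alpha>"])
    (rule diag)

text \<open>Every workload of a beta-invariant state is the workload of an alpha-invariant state for
  alpha < beta: move mass along the unique cycle until the alpha-exchange identity holds,
  which is possible by the intermediate value theorem because the imbalance is \<le> 0 after
  emptying the diagonal and \<ge> 0 after emptying the off-diagonal.\<close>
lemma invariant_workloads_mono:
  fixes l :: "real^'n::finite^'n" and e1 e2 :: 'n
  assumes feas: "\<And>q. lift_feasible l q = dominating q" and e12: "e1 \<noteq> e2" and U: "UNIV = {e1, e2}"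
    and ab: "0 < \<alpha>" "\<alpha> < \<beta>" and inv: "q \<in> invariant_states l \<beta>"
  shows "Wmap q \<in> Wmap ` invariant_states l \<alpha>"
proof -
  have b: "\<beta> > 0" using ab by simp
  have qn: "nonneg_mat q" using inv by (simp add: invariant_states_def)
  have min: "Lyap_min \<beta> (dominating q) q" using inv invariant_iff_Lyap_min[OF feas b qn] by blast
  have dom_nn: "\<And>r. r \<in> dominating q \<Longrightarrow> nonneg_mat r" by (simp add: dominating_def)
  note cycle = cycle_condition[OF b min dom_nn dominating_cycle_closed e12]
    and path = path_condition[OF b min]
  define x11 where "x11 = q$e1$e1"
  define x22 where "x22 = q$e2$e2"
  define x12 where "x12 = q$e1$e2"
  define x21 where "x21 = q$e2$e1"
  note x_defs = x11_def x22_def x12_def x21_def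
  have nn: "0 \<le> x11" "0 \<le> x22" "0 \<le> x12" "0 \<le> x21" using qn by (auto simp: nonneg_mat_def x_defs)
  obtain t where t: "- min x11 x22 \<le> t" "t \<le> min x12 x21" "imbalance \<alpha> x11 x22 x12 x21 t = 0"
  proof (rule imbalance_root[OF nn ab])
    show "x11 powr \<beta> + x22 powr \<beta> \<le> x12 powr \<beta> + x21 powr \<beta>" if "x11 > 0" "x22 > 0"
      using cycle[of e2 e1] that unfolding x_defs by simp
    show "x22 powr \<beta> \<le> x12 powr \<beta> + x21 powr \<beta>" if "x22 > 0"
      using path[of e2 e2 e1 e1] that unfolding x_defs by simp
    show "x11 powr \<beta> \<le> x12 powr \<beta> + x21 powr \<beta>" if "x11 > 0"
      using path[of e1 e1 e2 e2] that unfolding x_defs by simp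
    show "x12 powr \<beta> + x21 powr \<beta> \<le> x11 powr \<beta> + x22 powr \<beta>" if "x12 > 0" "x21 > 0"
      using cycle[of e1 e2] that unfolding x_defs by simp
    show "x21 powr \<beta> \<le> x11 powr \<beta> + x22 powr \<beta>" if "x21 > 0"
      using path[of e2 e1 e2 e1] that unfolding x_defs by simp
    show "x12 powr \<beta> \<le> x11 powr \<beta> + x22 powr \<beta>" if "x12 > 0"
      using path[of e1 e2 e1 e2] that unfolding x_defs by simp
  qed
  define q' where "q' = q + t *\<^sub>R cycle_move e1 e1 e2 e2"
  have q'_e: "q'$e1$e1 = x11 + t" "q'$e2$e2 = x22 + t" "q'$e1$e2 = x12 - t" "q'$e2$e1 = x21 - t"
    using e12 by (auto simp: q'_def cycle_move_def unit_mat_def x_defs)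
  have "nonneg_mat q'"
    unfolding nonneg_mat_def
  proof (intro allI)
    fix i j
    have "0 \<le> x11 + t" "0 \<le> x22 + t" "0 \<le> x12 - t" "0 \<le> x21 - t" using t by auto
    moreover have "\<And>x. x = e1 \<or> x = e2" using U by auto
    ultimately show "0 \<le> q'$i$j" using q'_e by (metis (full_types))
  qed
  moreover have "q'$e1$e1 powr \<alpha> + q'$e2$e2 powr \<alpha> = q'$e1$e2 powr \<alpha> + q'$e2$e1 powr \<alpha>"
    using t(3) unfolding q'_e imbalance_def by simp
  ultimately have "q' \<in> invariant_states l \<alpha>"
    by (rule exchange_two_invariant[OF feas ab(1) e12 U])
  then show ?thesis using Wmap_cycle_move[of q t] unfolding q'_def by (metis image_eqI)
qed

text \<open>The inclusion is strict: with s = 2 powr (1/alpha), the matrix [[0, 1], [1, s]] is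
  alpha-invariant, but any state with its workload has (2,2)-entry \<ge> s and off-diagonal
  entries \<le> 1, so s^beta > 2 violates the beta path condition.\<close>
lemma invariant_workloads_strict:
  fixes l :: "real^'n::finite^'n" and e1 e2 :: 'n
  assumes feas: "\<And>q. lift_feasible l q = dominating q" and e12: "e1 \<noteq> e2" and U: "UNIV = {e1, e2}"
    and ab: "0 < \<alpha>" "\<alpha> < \<beta>"
  obtains w where "w \<in> Wmap ` invariant_states l \<alpha>" "w \<notin> Wmap ` invariant_states l \<beta>"
proof -
  have b: "\<beta> > 0" using ab by simp
  define s where "s = (2::real) powr (1 / \<alpha>)"
  have s: "s > 0" by (simp add: s_def)
  define q :: "real^'n^'n" where
    "q = (\<chi> i j. if i = e1 then (if j = e1 then 0 else 1) else (if j = e1 then 1 else s))"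
  have q_e: "q$e1$e1 = 0" "q$e1$e2 = 1" "q$e2$e1 = 1" "q$e2$e2 = s" using e12 by (auto simp: q_def)
  have "q$e1$e1 powr \<alpha> + q$e2$e2 powr \<alpha> = q$e1$e2 powr \<alpha> + q$e2$e1 powr \<alpha>"
    using ab by (simp add: q_e s_def powr_powr)
  moreover have qn: "nonneg_mat q" using s by (auto simp: q_def nonneg_mat_def)
  ultimately have q_inv: "q \<in> invariant_states l \<alpha>"
    by (intro exchange_two_invariant[OF feas ab(1) e12 U])
  have "Wmap q \<notin> Wmap ` invariant_states l \<beta>"
  proof
    assume "Wmap q \<in> Wmap ` invariant_states l \<beta>"
    then obtain q' where q': "q' \<in> invariant_states l \<beta>" "Wmap q' = Wmap q" by auto
    have q'n: "nonneg_mat q'" using q' by (simp add: invariant_states_def)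
    then have min: "Lyap_min \<beta> (dominating q') q'" using q' invariant_iff_Lyap_min[OF feas b] by blast
    have q'_nn: "\<And>i j. 0 \<le> q'$i$j" using q'n by (simp add: nonneg_mat_def)
    have sum2: "(\<Sum>x\<in>UNIV. f x) = f e1 + f e2" for f :: "'n \<Rightarrow> real" by (simp add: U e12)
    have "row_sum q' e1 = row_sum q e1" "col_sum q' e1 = col_sum q e1" "row_sum q' e2 = row_sum q e2"
      using q'(2) by (auto simp: Wmap_eq_iff)
    then have sums: "q'$e1$e1 + q'$e1$e2 = 1" "q'$e1$e1 + q'$e2$e1 = 1" "q'$e2$e1 + q'$e2$e2 = 1 + s"
      by (simp_all add: row_sum_def col_sum_def sum2 q_e)
    then have le1: "q'$e1$e2 \<le> 1" "q'$e2$e1 \<le> 1" and ge: "s \<le> q'$e2$e2"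
      using q'_nn[of e1 e1] by linarith+
    have "q'$e2$e2 powr \<beta> \<le> q'$e2$e1 powr \<beta> + q'$e1$e2 powr \<beta>"
      using path_condition[OF b min, of e2 e2 e1 e1] ge s by simp
    moreover have "q'$e2$e1 powr \<beta> \<le> 1" "q'$e1$e2 powr \<beta> \<le> 1"
      using le1 q'_nn b powr_mono2[of \<beta> _ 1] by auto
    moreover have "s powr \<beta> \<le> q'$e2$e2 powr \<beta>" using ge s b by (intro powr_mono2) auto
    moreover have "2 < s powr \<beta>"
    proof -
      have "(2::real) powr 1 < 2 powr (\<beta> / \<alpha>)" using ab by (intro powr_less_mono) auto
      then show ?thesis using ab by (simp add: s_def powr_powr)
    qed
    ultimately show False by linarith
  qed
  then show ?thesis using q_inv that by blast
qed

theorem theorem8p3: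
  fixes l :: "real^'n::finite^'n"
  assumes pos: "\<And>i j. l$i$j > 0"
    and rows: "\<And>i. (\<Sum>j\<in>UNIV. l$i$j) = 1"
    and cols: "\<And>j. (\<Sum>i\<in>UNIV. l$i$j) = 1"
  shows "complete_loading l
    \<and> Xi l = range row_vec \<union> range col_vec
    \<and> (\<forall>w\<in>rel_interior (Wmap ` {q. nonneg_mat q}).
          \<exists>\<alpha>0>0. \<forall>\<alpha>. 0 < \<alpha> \<and> \<alpha> < \<alpha>0 \<longrightarrow> w \<in> Wmap ` invariant_states l \<alpha>)
    \<and> (CARD('n) = 2 \<longrightarrow>
         (\<forall>\<alpha> \<beta>. 0 < \<alpha> \<and> \<alpha> < \<beta> \<longrightarrow>
            Wmap ` invariant_states l \<beta> \<subset> Wmap ` invariant_states l \<alpha>))"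
proof -
  have nn: "nonneg_mat l" using pos by (simp add: nonneg_mat_def less_imp_le)
  have rows': "\<And>i. row_sum l i = 1" and cols': "\<And>j. col_sum l j = 1"
    using rows cols by (simp_all add: row_sum_def col_sum_def)
  have Xi: "Xi l = range row_vec \<union> range col_vec" by (rule Xi_doubly_stochastic[OF rows' cols'])
  have feas: "\<And>q. lift_feasible l q = dominating q"
    using lift_feasible_dominating[OF Xi] pos by (simp add: less_imp_neq[symmetric])
  have strict: "Wmap ` invariant_states l \<beta> \<subset> Wmap ` invariant_states l \<alpha>"
    if two: "CARD('n) = 2" and ab: "0 < \<alpha>" "\<alpha> < \<beta>" for \<alpha> \<beta>
  proof -
    obtain e1 e2 :: 'n where e: "e1 \<noteq> e2" "UNIV = {e1, e2}"
      using two card_2_iff[of "UNIV :: 'n set"] by auto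
    obtain w where "w \<in> Wmap ` invariant_states l \<alpha>" "w \<notin> Wmap ` invariant_states l \<beta>"
      using invariant_workloads_strict[OF feas e ab] .
    moreover have "Wmap ` invariant_states l \<beta> \<subseteq> Wmap ` invariant_states l \<alpha>"
      using invariant_workloads_mono[OF feas e ab] by blast
    ultimately show ?thesis by blast
  qed
  show ?thesis
  proof (intro conjI ballI impI allI)
    show "complete_loading l" by (rule complete_loading_doubly_stochastic[OF nn rows' cols'])
    show "Xi l = range row_vec \<union> range col_vec" by (rule Xi)
  next
    fix w assume "w \<in> rel_interior (Wmap ` {q :: real^'n^'n. nonneg_mat q})"
    then show "\<exists>\<alpha>0>0. \<forall>\<alpha>. 0 < \<alpha> \<and> \<alpha> < \<alpha>0 \<longrightarrow> w \<in> Wmap ` invariant_states l \<alpha>"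
      by (rule rel_interior_invariant_small_alpha[OF feas])
  next
    fix \<alpha> \<beta> :: real assume two: "CARD('n) = 2" and ab: "0 < \<alpha> \<and> \<alpha> < \<beta>"
    show "Wmap ` invariant_states l \<beta> \<subset> Wmap ` invariant_states l \<alpha>"
      using ab by (intro strict[OF two]) simp_all
  qed
qed

end
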